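(* In the standing setting, assume (A1), (A3), (A4) and (A7), and consider the coupled chains. Then there exist $h_0>0$ and $C>0$, independent of $s,h,k$, such that for all $s\in\mathbb N_+$, $h\in(0,h_0)$ and all even $k\ge2$, $$\mathbb E|\bar X^{f,c}_k-X^c_k|^4\le C\frac{h^2}{s^2}.$$
   Context: Standing setting. Let $d,n\in\mathbb N_+$, $\beta\ge0$, and let $a:\mathbb R^d\to\mathbb R^d$, $b:\mathbb R^d\times\mathbb R^n\to\mathbb R^d$ be measurable. $|\cdot|$ is the Euclidean norm (Frobenius norm for matrices), $\nabla$ the Jacobian in $x$, $D^\alpha$ the partial derivative in $x$ for a multi-index $\alpha$. For each $s\in\mathbb N_+$ a law on $\mathbb R^n$ is given; a random variable with this law is a drift variable at level $s$ (generically $U^s$), and $\mathbb E[b(x,U^s)]=a(x)$ for all $x$. All constants below are independent of $s,x,y$. (A1) $|a(x)-a(y)|\le L|x-y|$; $\langle x-y,a(x)-a(y)\rangle\le-K|x-y|^2$ with $K>0$; $a\in C^2$ with $|D^\alpha a|\le C_{a^{(|\alpha|)}}$ for $|\alpha|=1,2$. (A2) $\mathbb E|b(x,U^s)-b(y,U^s)|^2\le\bar L^2|x-y|^2$. (A3) $\mathbb E|b(x,U^s)-a(x)|^2\le\sigma_s^2(1+|x|^2)$ with $\sigma_s^2\le\kappa/s$. (A4) $\mathbb E|b(x,U^s)-a(x)|^4\le\sigma^{(4)}_s(1+|x|^4)$ with $\sigma^{(4)}_s\le\kappa/s^2$. (A5) for every $u$, $x\mapsto b(x,u)$ is $C^2$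 with $|D^\alpha b(x,u)|\le C_{b^{(2)}}$ for $|\alpha|=2$, and $\mathbb E|\nabla b(x,U^s)-\nabla a(x)|^4\le\sigma^{(4)}_s(1+|x|^4)$. (A6) $\mathbb E[D^\alpha b(x,U^s)]=D^\alpha a(x)$ for $|\alpha|\le2$. (A7) $|a(x)|^4\le L_0^{(4)}(1+|x|^4)$. (A8) every drift variable $U^{2s}$ at level $2s$ determines (measurably) two drift variables $U^{2s,1},U^{2s,2}$ at level $s$ with $b(x,U^{2s})=\frac12b(x,U^{2s,1})+\frac12b(x,U^{2s,2})$ for all $x$. Coupled chains. Fix $s\in\mathbb N_+$, $h>0$. Let $(Z_k)_{k\ge1}$ be i.i.d. $N(0,I_d)$, $(U^f_k)_{k\ge0}$ i.i.d. drift variables at level $2s$, and $X_0$ an $\mathbb R^d$-valued random variable with $\mathbb E|X_0|^4<\infty$, all independent; let $U^{f,1}_k,U^{f,2}_k$ be the level-$s$ variables given by (A8). Put $V^f_k=U^f_k$, $V^{c-}_k=U^{f,1}_k$, $V^{c+}_k=U^{f,2}_k$. For $j\in\{f,c-,c+\}$, all chains start at $X_0$: $X^{j,f}_{k+1}=X^{j,f}_k+hb(X^{j,f}_k,V^j_k)+\beta\sqrt hZ_{k+1}$ ($k\ge0$); for even $k\ge0$: $X^{j,c-}_{k+2}=X^{j,c-}_k+2hb(X^{j,c-}_k,V^j_k)+\beta\sqrt h(Z_{k+1}+Z_{k+2})$, $X^{j,c+}_{k+2}=X^{j,c+}_k+2hb(X^{j,c+}_k,V^j_{k+1})+\beta\sqrt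 h(Z_{k+1}+Z_{k+2})$. Exact-drift chains from $X_0$: $X_{k+1}=X_k+ha(X_k)+\beta\sqrt hZ_{k+1}$ and, for even $k$, $X^c_{k+2}=X^c_k+2ha(X^c_k)+\beta\sqrt h(Z_{k+1}+Z_{k+2})$. Averages: $\bar X^{j,c}_k=\frac12(X^{j,c-}_k+X^{j,c+}_k)$, $\bar X^{c,f}_k=\frac12(X^{c-,f}_k+X^{c+,f}_k)$. *)

theory Defs
  imports "HOL-Probability.Probability"
begin

definition std_gauss_vec :: "(real^'d) measure" where
  "std_gauss_vec = distr (PiM (UNIV::'d set) (\<lambda>_. density lborel std_normal_density))
                         borel (\<lambda>f. \<chi> i. f i)"

definition C2_bounded :: "(real^'d \<Rightarrow> real^'d) \<Rightarrow> real \<Rightarrow> real \<Rightarrow> bool" where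
  "C2_bounded f C1 C2 \<longleftrightarrow>
     (\<exists>Df D2f. (\<forall>x. (f has_derivative Df x) (at x)) \<and>
       (\<forall>x i. ((\<lambda>y. Df y (axis i 1)) has_derivative D2f x i) (at x)) \<and>
       (\<forall>i j. continuous_on UNIV (\<lambda>x. D2f x i (axis j 1))) \<and>
       (\<forall>x i. norm (Df x (axis i 1)) \<le> C1) \<and>
       (\<forall>x i j. norm (D2f x i (axis j 1)) \<le> C2))"

text \<open>Generic coarse chain with step 2h, evaluated at even times 2m:
  Y_0 = x0,  Y_{2m+2} = Y_{2m} + 2h F (Y_{2m}) (2m) + beta sqrt h (Z_{2m+1} + Z_{2m+2}).
  Here F y k is the drift used at (even) time k.\<close>
fun coarse_chain :: "real \<Rightarrow> real \<Rightarrow> (real^'d \<Rightarrow> nat \<Rightarrow> real^'d) \<Rightarrow> real^'d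
      \<Rightarrow> (nat \<Rightarrow> real^'d) \<Rightarrow> nat \<Rightarrow> real^'d" where
  "coarse_chain \<beta> h F x0 z 0 = x0"
| "coarse_chain \<beta> h F x0 z (Suc m) =
     coarse_chain \<beta> h F x0 z m
     + (2 * h) *\<^sub>R F (coarse_chain \<beta> h F x0 z m) (2 * m)
     + (\<beta> * sqrt h) *\<^sub>R (z (2 * m + 1) + z (2 * m + 2))"

text \<open>Canonical probability space for the coupled chains at level s:
  omega = (X_0, (Z, U^f)) with X_0 ~ nu, Z_k iid N(0,I_d) (Z_0 unused), U^f_k iid with law Q (2s).\<close>
definition coupled_space :: "(real^'d) measure \<Rightarrow> (nat \<Rightarrow> (real^'n) measure) \<Rightarrow> nat
      \<Rightarrow> ((real^'d) \<times> (nat \<Rightarrow> real^'d) \<times> (nat \<Rightarrow> real^'n)) measure" where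
  "coupled_space \<nu> Q s = \<nu> \<Otimes>\<^sub>M (PiM UNIV (\<lambda>_. std_gauss_vec) \<Otimes>\<^sub>M PiM UNIV (\<lambda>_. Q (2 * s)))"

definition Xfcm :: "real \<Rightarrow> real \<Rightarrow> (real^'d \<Rightarrow> real^'n \<Rightarrow> real^'d) \<Rightarrow> nat
      \<Rightarrow> (real^'d) \<times> (nat \<Rightarrow> real^'d) \<times> (nat \<Rightarrow> real^'n) \<Rightarrow> real^'d" where
  "Xfcm \<beta> h b k \<omega> = (case \<omega> of (x0, z, u) \<Rightarrow>
      coarse_chain \<beta> h (\<lambda>y j. b y (u j)) x0 z (k div 2))"

definition Xfcp :: "real \<Rightarrow> real \<Rightarrow> (real^'d \<Rightarrow> real^'n \<Rightarrow> real^'d) \<Rightarrow> nat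
      \<Rightarrow> (real^'d) \<times> (nat \<Rightarrow> real^'d) \<times> (nat \<Rightarrow> real^'n) \<Rightarrow> real^'d" where
  "Xfcp \<beta> h b k \<omega> = (case \<omega> of (x0, z, u) \<Rightarrow>
      coarse_chain \<beta> h (\<lambda>y j. b y (u (j + 1))) x0 z (k div 2))"

definition Xbar_fc :: "real \<Rightarrow> real \<Rightarrow> (real^'d \<Rightarrow> real^'n \<Rightarrow> real^'d) \<Rightarrow> nat
      \<Rightarrow> (real^'d) \<times> (nat \<Rightarrow> real^'d) \<times> (nat \<Rightarrow> real^'n) \<Rightarrow> real^'d" where
  "Xbar_fc \<beta> h b k \<omega> = (1/2) *\<^sub>R (Xfcm \<beta> h b k \<omega> + Xfcp \<beta> h b k \<omega>)"

definition Xc :: "real \<Rightarrow> real \<Rightarrow> (real^'d \<Rightarrow> real^'d) \<Rightarrow> nat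
      \<Rightarrow> (real^'d) \<times> (nat \<Rightarrow> real^'d) \<times> (nat \<Rightarrow> real^'n) \<Rightarrow> real^'d" where
  "Xc \<beta> h a k \<omega> = (case \<omega> of (x0, z, u) \<Rightarrow>
      coarse_chain \<beta> h (\<lambda>y j. a y) x0 z (k div 2))"

end

theory Submission
  imports Defs
begin

text \<open>
  Both coarse chains are driven by the same Gaussian increments, so their difference evolves by
  the contractive map \<open>y - x \<mapsto> (y - x) + 2h (a y - a x)\<close> (dissipativity of \<open>a\<close>) plus the
  centred drift noise \<open>2h (b(y,U) - a y)\<close>, which is independent of the past. Expanding the fourth
  power, the cross term vanishes in expectation, and the remaining terms are of order
  \<open>h\<^sup>2 E|\<xi>|\<^sup>2 |y - x|\<^sup>2 + h\<^sup>4 E|\<xi>|\<^sup>4\<close> with \<open>E|\<xi>|\<^sup>2 = O(1/s)\<close> and \<open>E|\<xi>|\<^sup>4 = O(1/s\<^sup>2)\<close>. Young's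
  inequality turns this into a recursion \<open>e' \<le> (1 - hK/2) e + O(h\<^sup>3/s\<^sup>2)(1 + E|x|\<^sup>4)\<close> whose
  fixed point is \<open>O(h\<^sup>2/s\<^sup>2)\<close>, provided the fourth moments of the exact chain stay bounded; that
  follows from the same kind of one-step recursion for the exact chain. Finally
  \<open>|(u + v)/2|\<^sup>4 \<le> (|u|\<^sup>4 + |v|\<^sup>4)/2\<close> passes from the two coarse chains to their average.
\<close>

lemma power2_norm_add_scaleR:
  fixes D v :: "'a::real_inner"
  shows "norm (D + c *\<^sub>R v)^2 = norm D^2 + 2*c*(D \<bullet> v) + c^2*norm v^2"
  unfolding power2_norm_eq_inner
  by (simp add: inner_add_left inner_add_right inner_commute algebra_simps power2_eq_square)

lemma power4_norm_add_scaleR_le: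
  fixes D v :: "'a::real_inner"
  shows "norm (D + c *\<^sub>R v)^4
    \<le> norm D^4 + 4*c*norm D^2*(D \<bullet> v) + 8*c^2*norm D^2*norm v^2 + 3*c^4*norm v^4"
proof -
  define p where "p = norm D^2"
  define q where "q = D \<bullet> v"
  define r where "r = norm v^2"
  have cauchy_schwarz: "q^2 \<le> p*r"
  proof -
    have "\<bar>q\<bar> \<le> norm D * norm v" unfolding q_def by (rule Cauchy_Schwarz_ineq2)
    then have "q^2 \<le> (norm D * norm v)^2"
      by (metis abs_ge_zero abs_le_square_iff abs_of_nonneg norm_ge_zero zero_le_mult_iff)
    then show ?thesis unfolding p_def r_def by (simp add: power_mult_distrib)
  qed
  have square: "0 \<le> 2*c^2*q^2 - 4*c^3*q*r + 2*c^4*r^2"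
  proof -
    have "2*c^2*q^2 - 4*c^3*q*r + 2*c^4*r^2 = 2*(c*q - c^2*r)^2"
      by (simp add: power2_eq_square algebra_simps power_def)
    then show ?thesis by simp
  qed
  have "norm (D + c *\<^sub>R v)^4 = (p + 2*c*q + c^2*r)^2"
    using power2_norm_add_scaleR[of D c v] unfolding p_def q_def r_def
    by (metis power_mult numeral_Bit0 numeral_One mult_2 one_add_one)
  also have "\<dots> = p^2 + 4*c*p*q + 8*c^2*p*r + 3*c^4*r^2
      - (2*c^2*q^2 - 4*c^3*q*r + 2*c^4*r^2) - 6*(c^2*(p*r - q^2))"
    by (simp add: power2_eq_square algebra_simps power_def)
  also have "\<dots> \<le> p^2 + 4*c*p*q + 8*c^2*p*r + 3*c^4*r^2"
    using square cauchy_schwarz mult_left_mono[of "q^2" "p*r" "c^2"] by (simp add: algebra_simps)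
  also have "\<dots> = norm D^4 + 4*c*norm D^2*(D \<bullet> v) + 8*c^2*norm D^2*norm v^2 + 3*c^4*norm v^4"
    unfolding p_def q_def r_def by (simp add: power_mult[symmetric] mult.assoc)
  finally show ?thesis .
qed

lemma mult_le_half_square_add:
  fixes W t K :: real
  assumes "0 < K"
  shows "W * t \<le> K/2 * t^2 + W^2/(2*K)"
proof -
  have "0 \<le> (K*t - W)^2" by simp
  then have "2*K*(W*t) \<le> K^2*t^2 + W^2" by (simp add: power2_eq_square algebra_simps)
  then have "W*t \<le> (K^2*t^2 + W^2)/(2*K)" using assms by (simp add: field_simps)
  also have "\<dots> = K/2 * t^2 + W^2/(2*K)" using assms by (simp add: field_simps power2_eq_square)
  finally show ?thesis .
qed

lemma power2_add_le: "((p::real) + q)^2 \<le> 2*p^2 + 2*q^2"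
proof -
  have "0 \<le> (p - q)^2" by simp
  then show ?thesis by (simp add: power2_eq_square algebra_simps)
qed

lemma power4_add_le: "((p::real) + q)^4 \<le> 8*p^4 + 8*q^4"
proof -
  have "(p+q)^4 = ((p+q)^2)^2" by (simp flip: power_mult)
  also have "\<dots> \<le> (2*p^2 + 2*q^2)^2" using power2_add_le[of p q] by (intro power_mono) auto
  also have "\<dots> \<le> 2*(2*p^2)^2 + 2*(2*q^2)^2" by (rule power2_add_le)
  also have "\<dots> = 8*p^4 + 8*q^4" by (simp add: power_mult_distrib flip: power_mult)
  finally show ?thesis .
qed

lemma power4_norm_midpoint_le:
  fixes u v :: "'a::real_normed_vector"
  shows "norm ((1/2) *\<^sub>R (u + v))^4 \<le> (norm u^4 + norm v^4)/2"
proof -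
  have half: "((x + y)/2)^2 \<le> (x^2 + y^2)/2" for x y :: real
    using power2_add_le[of x y] by (simp add: power_divide)
  have "norm ((1/2) *\<^sub>R (u + v)) \<le> (norm u + norm v)/2" using norm_triangle_ineq[of u v] by simp
  then have "norm ((1/2) *\<^sub>R (u + v))^4 \<le> ((norm u + norm v)/2)^4" by (intro power_mono) auto
  also have "\<dots> = (((norm u + norm v)/2)^2)^2" by (simp flip: power_mult)
  also have "\<dots> \<le> ((norm u^2 + norm v^2)/2)^2" using half by (intro power_mono) auto
  also have "\<dots> \<le> ((norm u^2)^2 + (norm v^2)^2)/2" by (rule half)
  also have "\<dots> = (norm u^4 + norm v^4)/2" by (simp flip: power_mult)
  finally show ?thesis .
qed

lemma integrable_integral_le_of_nn_integral_le:
  fixes f :: "'a \<Rightarrow> real"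
  assumes f: "f \<in> borel_measurable M" and nonneg: "\<And>x. 0 \<le> f x"
    and le: "(\<integral>\<^sup>+x. ennreal (f x) \<partial>M) \<le> ennreal m" and m: "0 \<le> m"
  shows "integrable M f" "integral\<^sup>L M f \<le> m"
proof -
  show int: "integrable M f"
    using f le nonneg by (intro integrableI_bounded) (auto simp: top_unique intro: le_less_trans[OF le])
  have "ennreal (integral\<^sup>L M f) = (\<integral>\<^sup>+x. ennreal (f x) \<partial>M)"
    using int nonneg by (subst nn_integral_eq_integral) auto
  with le m show "integral\<^sup>L M f \<le> m"
    by (metis ennreal_le_iff)
qed

lemma (in prob_space) nn_integral_lincomb:
  assumes [measurable]: "f \<in> borel_measurable M" "g \<in> borel_measurable M"
    and nonneg: "\<And>x. 0 \<le> f x" "\<And>x. 0 \<le> g x" "0 \<le> p" "0 \<le> q" "0 \<le> c"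
  shows "(\<integral>\<^sup>+x. ennreal (p * f x + q * g x + c) \<partial>M)
    = ennreal p * (\<integral>\<^sup>+x. ennreal (f x) \<partial>M) + ennreal q * (\<integral>\<^sup>+x. ennreal (g x) \<partial>M) + ennreal c"
proof -
  have "(\<integral>\<^sup>+x. ennreal (p * f x + q * g x + c) \<partial>M)
      = (\<integral>\<^sup>+x. ennreal p * ennreal (f x) + ennreal q * ennreal (g x) + ennreal c \<partial>M)"
    using nonneg by (intro nn_integral_cong) (simp add: ennreal_plus ennreal_mult)
  also have "\<dots> = ennreal p * (\<integral>\<^sup>+x. ennreal (f x) \<partial>M) + ennreal q * (\<integral>\<^sup>+x. ennreal (g x) \<partial>M) + ennreal c"
    by (simp add: nn_integral_add nn_integral_cmult emeasure_space_1)
  finally show ?thesis .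
qed

lemma ennreal_linear_recurrence_le:
  fixes e :: "nat \<Rightarrow> ennreal"
  assumes start: "e 0 \<le> ennreal M" and step: "\<And>m. e (Suc m) \<le> ennreal \<rho> * e m + ennreal B"
    and nonneg: "0 \<le> \<rho>" "0 \<le> B" "0 \<le> M" and fixed_point: "\<rho>*M + B \<le> M"
  shows "e m \<le> ennreal M"
proof (induction m)
  case 0 show ?case by (rule start)
next
  case (Suc m)
  have "e (Suc m) \<le> ennreal \<rho> * e m + ennreal B" by (rule step)
  also have "\<dots> \<le> ennreal \<rho> * ennreal M + ennreal B" using Suc by (intro add_mono mult_left_mono) auto
  also have "\<dots> = ennreal (\<rho>*M + B)" using nonneg by (simp add: ennreal_mult ennreal_plus)
  also have "\<dots> \<le> ennreal M" using fixed_point by (rule ennreal_leI)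
  finally show ?case .
qed

section \<open>Moments of a centred perturbation\<close>

lemma nn_integral_power2_norm_add_centered_le:
  fixes v :: "'a \<Rightarrow> 'b::euclidean_space" and D :: 'b and c m2 :: real
  assumes "prob_space P" and v: "v \<in> borel_measurable P"
    and centered: "\<And>A. integrable P (\<lambda>w. A \<bullet> v w) \<and> (\<integral>w. A \<bullet> v w \<partial>P) = 0"
    and m2: "(\<integral>\<^sup>+w. ennreal (norm (v w)^2) \<partial>P) \<le> ennreal m2" "0 \<le> m2"
  shows "(\<integral>\<^sup>+w. ennreal (norm (D + c *\<^sub>R v w)^2) \<partial>P) \<le> ennreal (norm D^2 + c^2*m2)"
proof -
  interpret P: prob_space P by fact
  have "(\<lambda>w. norm (v w)^2) \<in> borel_measurable P" using v by measurable
  note v2 = integrable_integral_le_of_nn_integral_le[OF this _ m2, simplified]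
  define g where "g w = norm D^2 + 2*c*(D \<bullet> v w) + c^2*norm (v w)^2" for w
  have g: "norm (D + c *\<^sub>R v w)^2 = g w" for w unfolding g_def by (rule power2_norm_add_scaleR)
  have int_g: "integrable P g" unfolding g_def
    using centered v2(1) by (intro Bochner_Integration.integrable_add integrable_mult_right) auto
  have "(\<integral>\<^sup>+w. ennreal (norm (D + c *\<^sub>R v w)^2) \<partial>P) = ennreal (integral\<^sup>L P g)"
    using int_g g by (subst nn_integral_eq_integral[symmetric]) (auto simp: g[symmetric])
  also have "integral\<^sup>L P g = norm D^2 + c^2*(\<integral>w. norm (v w)^2 \<partial>P)"
    unfolding g_def using centered v2(1)
    by (simp add: Bochner_Integration.integral_add integral_mult_right_zero P.prob_space)
  also have "ennreal \<dots> \<le> ennreal (norm D^2 + c^2*m2)"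
    using v2(2) by (intro ennreal_leI add_mono mult_left_mono order_refl) auto
  finally show ?thesis .
qed

text \<open>The cross term \<open>4c|D|\<^sup>2 (D \<bullet> v)\<close> of the expansion has mean zero.\<close>

lemma nn_integral_power4_norm_add_centered_le:
  fixes v :: "'a \<Rightarrow> 'b::euclidean_space" and D :: 'b and c m2 m4 :: real
  assumes "prob_space P" and v: "v \<in> borel_measurable P"
    and centered: "\<And>A. integrable P (\<lambda>w. A \<bullet> v w) \<and> (\<integral>w. A \<bullet> v w \<partial>P) = 0"
    and m2: "(\<integral>\<^sup>+w. ennreal (norm (v w)^2) \<partial>P) \<le> ennreal m2" "0 \<le> m2"
    and m4: "(\<integral>\<^sup>+w. ennreal (norm (v w)^4) \<partial>P) \<le> ennreal m4" "0 \<le> m4"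
  shows "(\<integral>\<^sup>+w. ennreal (norm (D + c *\<^sub>R v w)^4) \<partial>P)
    \<le> ennreal (norm D^4 + 8*c^2*norm D^2*m2 + 3*c^4*m4)"
proof -
  interpret P: prob_space P by fact
  have "(\<lambda>w. norm (v w)^2) \<in> borel_measurable P" using v by measurable
  note v2 = integrable_integral_le_of_nn_integral_le[OF this _ m2, simplified]
  have "(\<lambda>w. norm (v w)^4) \<in> borel_measurable P" using v by measurable
  note v4 = integrable_integral_le_of_nn_integral_le[OF this _ m4, simplified]
  define g where "g w = norm D^4 + 4*c*norm D^2*(D \<bullet> v w)
    + 8*c^2*norm D^2*norm (v w)^2 + 3*c^4*norm (v w)^4" for w
  have le_g: "norm (D + c *\<^sub>R v w)^4 \<le> g w" for w
    unfolding g_def by (rule power4_norm_add_scaleR_le)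
  have int_g: "integrable P g" unfolding g_def
    using centered v2(1) v4(1) by (intro Bochner_Integration.integrable_add integrable_mult_right) auto
  have "(\<integral>\<^sup>+w. ennreal (norm (D + c *\<^sub>R v w)^4) \<partial>P) \<le> (\<integral>\<^sup>+w. ennreal (g w) \<partial>P)"
    by (intro nn_integral_mono ennreal_leI le_g)
  also have "\<dots> = ennreal (integral\<^sup>L P g)"
  proof -
    have "0 \<le> g w" for w using le_g[of w] by (meson norm_ge_zero order_trans zero_le_power)
    then show ?thesis using int_g by (subst nn_integral_eq_integral) auto
  qed
  also have "integral\<^sup>L P g
      = norm D^4 + 8*c^2*norm D^2*(\<integral>w. norm (v w)^2 \<partial>P) + 3*c^4*(\<integral>w. norm (v w)^4 \<partial>P)"
    unfolding g_def using centered v2(1) v4(1)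
    by (simp add: Bochner_Integration.integral_add integral_mult_right_zero P.prob_space)
  also have "ennreal \<dots> \<le> ennreal (norm D^4 + 8*c^2*norm D^2*m2 + 3*c^4*m4)"
    using v2(2) v4(2) by (intro ennreal_leI add_mono mult_left_mono order_refl) auto
  finally show ?thesis .
qed

lemma nn_integral_power4_norm_add_centered_pair_le:
  fixes P :: "'b::euclidean_space measure" and A :: 'b and c m2 m4 :: real
  assumes P: "prob_space P" and sets_P: "sets P = sets borel"
    and centered: "\<And>A. integrable P (\<lambda>z. A \<bullet> z) \<and> (\<integral>z. A \<bullet> z \<partial>P) = 0"
    and m2: "(\<integral>\<^sup>+z. ennreal (norm z^2) \<partial>P) \<le> ennreal m2" "0 \<le> m2"
    and m4: "(\<integral>\<^sup>+z. ennreal (norm z^4) \<partial>P) \<le> ennreal m4" "0 \<le> m4"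
  shows "(\<integral>\<^sup>+p1. \<integral>\<^sup>+p2. ennreal (norm (A + c *\<^sub>R (p1 + p2))^4) \<partial>P \<partial>P)
    \<le> ennreal (norm A^4 + 16*c^2*m2*norm A^2 + c^4*(8*m2^2 + 6*m4))"
proof -
  interpret P: prob_space P by fact
  have id: "(\<lambda>z. z) \<in> borel_measurable P" using sets_P measurable_ident_sets by blast
  note M2 = nn_integral_power2_norm_add_centered_le[OF P id centered m2]
  note M4 = nn_integral_power4_norm_add_centered_le[OF P id centered m2 m4]
  have borel: "f \<in> borel_measurable P" if "f \<in> borel_measurable borel" for f :: "'b \<Rightarrow> real"
    using that measurable_cong_sets[OF sets_P refl] by blast
  have "(\<integral>\<^sup>+p1. \<integral>\<^sup>+p2. ennreal (norm (A + c *\<^sub>R (p1 + p2))^4) \<partial>P \<partial>P)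
     \<le> (\<integral>\<^sup>+p1. ennreal (1 * norm (A + c *\<^sub>R p1)^4 + (8*c^2*m2) * norm (A + c *\<^sub>R p1)^2 + 3*c^4*m4) \<partial>P)"
  proof (rule nn_integral_mono)
    fix p1 :: 'b
    have "A + c *\<^sub>R (p1 + p2) = (A + c *\<^sub>R p1) + c *\<^sub>R p2" for p2 by (simp add: algebra_simps)
    then show "(\<integral>\<^sup>+p2. ennreal (norm (A + c *\<^sub>R (p1 + p2))^4) \<partial>P)
       \<le> ennreal (1 * norm (A + c *\<^sub>R p1)^4 + (8*c^2*m2) * norm (A + c *\<^sub>R p1)^2 + 3*c^4*m4)"
      using M4[of "A + c *\<^sub>R p1" c] by (simp add: ac_simps)
  qed
  also have "\<dots> = (\<integral>\<^sup>+p1. ennreal (norm (A + c *\<^sub>R p1)^4) \<partial>P)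
      + ennreal (8*c^2*m2) * (\<integral>\<^sup>+p1. ennreal (norm (A + c *\<^sub>R p1)^2) \<partial>P) + ennreal (3*c^4*m4)"
    using m2 m4
    by (subst P.nn_integral_lincomb) (auto intro!: borel borel_measurable_continuous_onI continuous_intros)
  also have "\<dots> \<le> ennreal (norm A^4 + 8*c^2*norm A^2*m2 + 3*c^4*m4)
      + ennreal (8*c^2*m2) * ennreal (norm A^2 + c^2*m2) + ennreal (3*c^4*m4)"
    by (intro add_mono mult_left_mono M2 M4 order_refl) auto
  also have "\<dots> = ennreal (norm A^4 + 8*c^2*norm A^2*m2 + 3*c^4*m4
      + (8*c^2*m2) * (norm A^2 + c^2*m2) + 3*c^4*m4)"
    using m2 m4 by (simp add: ennreal_plus[symmetric] ennreal_mult[symmetric] del: ennreal_plus)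
  also have "norm A^4 + 8*c^2*norm A^2*m2 + 3*c^4*m4 + (8*c^2*m2) * (norm A^2 + c^2*m2) + 3*c^4*m4
      = norm A^4 + 16*c^2*m2*norm A^2 + c^4*(8*m2^2 + 6*m4)"
    by (simp add: algebra_simps power2_eq_square power4_eq_xxxx)
  finally show ?thesis .
qed

abbreviation std_normal_measure :: "real measure" where
  "std_normal_measure \<equiv> density lborel std_normal_density"

lemma prob_space_std_normal_measure: "prob_space std_normal_measure"
  by (rule prob_space_normal_density) simp

lemma std_normal_measure_mean:
  "integrable std_normal_measure (\<lambda>x. x)" "(\<integral>x. x \<partial>std_normal_measure) = 0"
proof -
  have "integrable lborel (\<lambda>x. std_normal_density x * x^1)"
    by (rule integrable_std_normal_moment)
  then show "integrable std_normal_measure (\<lambda>x. x)"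
    by (subst integrable_density) auto
  have "(\<integral>x. x \<partial>std_normal_measure) = (\<integral>x. std_normal_density x * x^(2*0+1) \<partial>lborel)"
    by (subst integral_density) auto
  also have "\<dots> = 0" by (rule integral_std_normal_moment_odd)
  finally show "(\<integral>x. x \<partial>std_normal_measure) = 0" .
qed

lemma nn_integral_std_normal_measure_even_power:
  "(\<integral>\<^sup>+x. ennreal (x^(2*k)) \<partial>std_normal_measure) = ennreal (fact (2 * k) / (2^k * fact k))"
proof -
  have "(\<integral>\<^sup>+x. ennreal (x^(2*k)) \<partial>std_normal_measure)
      = (\<integral>\<^sup>+x. ennreal (std_normal_density x) * ennreal (x^(2*k)) \<partial>lborel)"
    by (subst nn_integral_density) auto
  also have "\<dots> = (\<integral>\<^sup>+x. ennreal (std_normal_density x * x^(2*k)) \<partial>lborel)"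
    by (intro nn_integral_cong) (simp add: ennreal_mult)
  also have "\<dots> = ennreal (\<integral>x. std_normal_density x * x^(2*k) \<partial>lborel)"
    using integrable_std_normal_moment[of "2*k"]
    by (subst nn_integral_eq_integral) (auto simp: power_mult)
  also have "\<dots> = ennreal (fact (2 * k) / (2^k * fact k))"
    by (simp add: integral_std_normal_moment_even)
  finally show ?thesis .
qed

lemma measurable_vec_lambda_PiM:
  assumes "sets M = sets (borel :: real measure)"
  shows "(\<lambda>f. \<chi> i. f i) \<in> borel_measurable (PiM (UNIV::'d::finite set) (\<lambda>_. M))"
proof (subst borel_measurable_euclidean_space, intro ballI)
  fix j :: "real^'d" assume "j \<in> Basis"
  then obtain k where j: "j = axis k 1" by (auto simp: Basis_vec_def)
  have "(\<lambda>f. f k) \<in> measurable (PiM (UNIV::'d set) (\<lambda>_. M)) M"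
    by (rule measurable_component_singleton) simp
  then have "(\<lambda>f. f k) \<in> borel_measurable (PiM (UNIV::'d set) (\<lambda>_. M))"
    using measurable_cong_sets[OF refl assms] by blast
  moreover have "(\<lambda>f. (\<chi> i. f i) \<bullet> j) = (\<lambda>f. f k)"
    unfolding j inner_axis by simp
  ultimately show "(\<lambda>f. (\<chi> i. f i) \<bullet> j) \<in> borel_measurable (PiM UNIV (\<lambda>_. M))"
    by simp
qed

lemma sets_std_gauss_vec: "sets std_gauss_vec = sets borel"
  unfolding std_gauss_vec_def by simp

lemma prob_space_std_gauss_vec: "prob_space (std_gauss_vec :: (real^'d::finite) measure)"
proof -
  interpret P: prob_space "PiM (UNIV::'d set) (\<lambda>_. std_normal_measure)"
    by (intro prob_space_PiM prob_space_std_normal_measure)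
  show ?thesis unfolding std_gauss_vec_def
    by (intro P.prob_space_distr measurable_vec_lambda_PiM) simp
qed

lemma std_normal_PiM_component:
  fixes G :: "real \<Rightarrow> real"
  assumes [measurable]: "G \<in> borel_measurable borel"
  shows "(\<integral>\<^sup>+f. ennreal (G (f k)) \<partial>PiM (UNIV::'d::finite set) (\<lambda>_. std_normal_measure))
      = (\<integral>\<^sup>+x. ennreal (G x) \<partial>std_normal_measure)"
    and "integrable std_normal_measure G
      \<Longrightarrow> integrable (PiM (UNIV::'d set) (\<lambda>_. std_normal_measure)) (\<lambda>f. G (f k))"
    and "(\<integral>f. G (f k) \<partial>PiM (UNIV::'d set) (\<lambda>_. std_normal_measure)) = (\<integral>x. G x \<partial>std_normal_measure)"
proof -
  let ?P = "PiM (UNIV::'d set) (\<lambda>_. std_normal_measure)"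
  have distr: "distr ?P std_normal_measure (\<lambda>f. f k) = std_normal_measure"
    by (rule distr_PiM_component) (auto intro: prob_space_std_normal_measure)
  have m: "(\<lambda>f. f k) \<in> measurable ?P std_normal_measure" by simp
  show "(\<integral>\<^sup>+f. ennreal (G (f k)) \<partial>?P) = (\<integral>\<^sup>+x. ennreal (G x) \<partial>std_normal_measure)"
    by (subst distr[symmetric], subst nn_integral_distr[OF m]) auto
  show "integrable std_normal_measure G \<Longrightarrow> integrable ?P (\<lambda>f. G (f k))"
    using integrable_distr_eq[OF m, of G] distr by simp
  show "(\<integral>f. G (f k) \<partial>?P) = (\<integral>x. G x \<partial>std_normal_measure)"
    by (subst distr[symmetric], subst integral_distr[OF m]) auto
qed

lemma std_gauss_vec_centered:
  fixes A :: "real^'d::finite"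
  shows "integrable std_gauss_vec (\<lambda>z. A \<bullet> z) \<and> (\<integral>z. A \<bullet> z \<partial>std_gauss_vec) = 0"
proof -
  let ?P = "PiM (UNIV::'d set) (\<lambda>_. std_normal_measure)"
  have vec: "(\<lambda>f. \<chi> i. f i) \<in> measurable ?P (borel :: (real^'d) measure)"
    by (rule measurable_vec_lambda_PiM) simp
  have inner_vec: "A \<bullet> (\<chi> i. f i) = (\<Sum>i\<in>UNIV. A $ i * f i)" for f by (simp add: inner_vec_def)
  have int_comp: "integrable ?P (\<lambda>f. f i)" for i
    using std_normal_PiM_component(2)[OF measurable_ident_sets[OF refl] std_normal_measure_mean(1), of i]
    by simp
  have mean_comp: "(\<integral>f. f i \<partial>?P) = 0" for i
    using std_normal_PiM_component(3)[OF measurable_ident_sets[OF refl], of i] std_normal_measure_mean(2)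
    by simp
  have A_meas: "(\<lambda>z::real^'d. A \<bullet> z) \<in> borel_measurable borel"
    by (intro borel_measurable_continuous_onI continuous_intros)
  have "integrable ?P (\<lambda>f. A \<bullet> (\<chi> i. f i))" unfolding inner_vec using int_comp by simp
  then have int: "integrable std_gauss_vec (\<lambda>z. A \<bullet> z)"
    unfolding std_gauss_vec_def using integrable_distr_eq[OF vec A_meas] by simp
  have "(\<integral>z. A \<bullet> z \<partial>std_gauss_vec) = (\<integral>f. (\<Sum>i\<in>UNIV. A $ i * f i) \<partial>?P)"
    unfolding std_gauss_vec_def using integral_distr[OF vec A_meas] by (simp add: inner_vec)
  also have "\<dots> = (\<Sum>i\<in>UNIV. A $ i * (\<integral>f. f i \<partial>?P))"
    using int_comp by (simp add: integral_sum' integral_mult_right_zero)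
  also have "\<dots> = 0" using mean_comp by simp
  finally show ?thesis using int by simp
qed

lemma nn_integral_std_gauss_vec_norm2:
  "(\<integral>\<^sup>+z. ennreal (norm (z::real^'d::finite)^2) \<partial>std_gauss_vec) = ennreal (real CARD('d))"
proof -
  let ?P = "PiM (UNIV::'d set) (\<lambda>_. std_normal_measure)"
  have vec: "(\<lambda>f. \<chi> i. f i) \<in> measurable ?P (borel :: (real^'d) measure)"
    by (rule measurable_vec_lambda_PiM) simp
  have norm2: "norm (\<chi> i. f i :: real^'d)^2 = (\<Sum>i\<in>UNIV. (f i)^2)" for f
    unfolding power2_norm_eq_inner inner_vec_def by (simp add: power2_eq_square)
  have "(\<integral>\<^sup>+z. ennreal (norm (z::real^'d)^2) \<partial>std_gauss_vec)
      = (\<integral>\<^sup>+f. ennreal (norm (\<chi> i. f i :: real^'d)^2) \<partial>?P)"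
    unfolding std_gauss_vec_def by (subst nn_integral_distr[OF vec]) auto
  also have "\<dots> = (\<Sum>i\<in>UNIV. (\<integral>\<^sup>+f. ennreal ((f i)^2) \<partial>?P))"
    unfolding norm2 by (subst nn_integral_sum[symmetric]) (auto simp: sum_ennreal)
  also have "\<dots> = (\<Sum>i\<in>(UNIV::'d set). 1)"
  proof (rule sum.cong[OF refl])
    fix i :: 'd
    show "(\<integral>\<^sup>+f. ennreal ((f i)^2) \<partial>?P) = 1"
      using std_normal_PiM_component(1)[of "\<lambda>x. x^2" i] nn_integral_std_normal_measure_even_power[of 1]
      by simp
  qed
  finally show ?thesis by (simp add: ennreal_of_nat_eq_real_of_nat)
qed

lemma nn_integral_std_gauss_vec_norm4_le:
  "(\<integral>\<^sup>+z. ennreal (norm (z::real^'d::finite)^4) \<partial>std_gauss_vec) \<le> ennreal (3 * real CARD('d)^2)"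
proof -
  let ?P = "PiM (UNIV::'d set) (\<lambda>_. std_normal_measure)"
  have vec: "(\<lambda>f. \<chi> i. f i) \<in> measurable ?P (borel :: (real^'d) measure)"
    by (rule measurable_vec_lambda_PiM) simp
  have norm4: "norm (\<chi> i. f i :: real^'d)^4 \<le> real CARD('d) * (\<Sum>i\<in>UNIV. (f i)^4)" for f
  proof -
    have "norm (\<chi> i. f i :: real^'d)^2 = (\<Sum>i\<in>UNIV. (f i)^2)"
      unfolding power2_norm_eq_inner inner_vec_def by (simp add: power2_eq_square)
    then have "norm (\<chi> i. f i :: real^'d)^4 = (\<Sum>i\<in>UNIV. (f i)^2)^2"
      by (metis (no_types, lifting) numeral_Bit0 numeral_One one_add_one power_add power2_eq_square)
    also have "\<dots> \<le> (\<Sum>i\<in>UNIV. ((f i)^2)^2) * card (UNIV::'d set)"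
      by (rule sum_squared_le_sum_of_squares)
    finally show ?thesis by (simp add: power_mult[symmetric] mult.commute)
  qed
  have "(\<integral>\<^sup>+z. ennreal (norm (z::real^'d)^4) \<partial>std_gauss_vec)
      = (\<integral>\<^sup>+f. ennreal (norm (\<chi> i. f i :: real^'d)^4) \<partial>?P)"
    unfolding std_gauss_vec_def by (subst nn_integral_distr[OF vec]) auto
  also have "\<dots> \<le> (\<integral>\<^sup>+f. ennreal (real CARD('d)) * (\<Sum>i\<in>UNIV. ennreal ((f i)^4)) \<partial>?P)"
    using norm4 by (intro nn_integral_mono)
      (simp add: sum_ennreal ennreal_mult[symmetric] sum_nonneg ennreal_leI)
  also have "\<dots> = ennreal (real CARD('d)) * (\<Sum>i\<in>UNIV. (\<integral>\<^sup>+f. ennreal ((f i)^4) \<partial>?P))"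
    by (subst nn_integral_cmult, measurable, subst nn_integral_sum) auto
  also have "\<dots> = ennreal (real CARD('d)) * (\<Sum>i\<in>(UNIV::'d set). 3)"
  proof (intro arg_cong[where f="(*) _"] sum.cong[OF refl])
    fix i :: 'd
    show "(\<integral>\<^sup>+f. ennreal ((f i)^4) \<partial>?P) = 3"
      using std_normal_PiM_component(1)[of "\<lambda>x. x^4" i] nn_integral_std_normal_measure_even_power[of 2]
      by (simp add: fact_numeral)
  qed
  also have "\<dots> = ennreal (3 * real CARD('d)^2)"
    by (simp add: ennreal_of_nat_eq_real_of_nat ennreal_mult power2_eq_square ac_simps)
  finally show ?thesis .
qed

lemma nn_integral_std_gauss_pair_power4_le:
  fixes A :: "real^'d::finite"
  shows "(\<integral>\<^sup>+p1. \<integral>\<^sup>+p2. ennreal (norm (A + c *\<^sub>R (p1 + p2))^4) \<partial>std_gauss_vec \<partial>std_gauss_vec)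
    \<le> ennreal (norm A^4 + 16*c^2*real CARD('d)*norm A^2
        + c^4*(8*real CARD('d)^2 + 6*(3*real CARD('d)^2)))"
  by (rule nn_integral_power4_norm_add_centered_pair_le[OF prob_space_std_gauss_vec
        sets_std_gauss_vec std_gauss_vec_centered])
    (auto simp: nn_integral_std_gauss_vec_norm2 nn_integral_std_gauss_vec_norm4_le)

section \<open>Resampling one coordinate of a product space\<close>

text \<open>\<open>resampling_invariant N P T\<close>: if \<open>y\<close> is drawn from \<open>N\<close> and one of its coordinates is then
  overwritten by an independent \<open>P\<close>-sample \<open>p\<close>, the result \<open>T y p\<close> is again distributed as \<open>N\<close>.\<close>

definition resampling_invariant :: "'a measure \<Rightarrow> 'b measure \<Rightarrow> ('a \<Rightarrow> 'b \<Rightarrow> 'a) \<Rightarrow> bool" where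
  "resampling_invariant N P T \<longleftrightarrow> (\<lambda>(y, p). T y p) \<in> measurable (N \<Otimes>\<^sub>M P) N \<and>
     (\<forall>G \<in> borel_measurable N. (\<integral>\<^sup>+y. G y \<partial>N) = (\<integral>\<^sup>+y. \<integral>\<^sup>+p. G (T y p) \<partial>P \<partial>N))"

lemma resampling_invariant_PiM:
  assumes R: "prob_space R"
  shows "resampling_invariant (PiM (UNIV::'i set) (\<lambda>_. R)) R (\<lambda>X v. X(i := v))"
proof -
  let ?P = "PiM (UNIV::'i set) (\<lambda>_. R)"
  interpret R: prob_space R by fact
  interpret P: prob_space ?P by (intro prob_space_PiM R)
  interpret RP: pair_sigma_finite R ?P by unfold_locales
  have distr: "distr (R \<Otimes>\<^sub>M ?P) ?P (\<lambda>(x, X). X(i := x)) = ?P"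
    using distr_pair_PiM_eq_PiM[of UNIV "\<lambda>_. R" i] R by simp
  have m: "(\<lambda>(x, X). X(i := x)) \<in> measurable (R \<Otimes>\<^sub>M ?P) ?P"
    unfolding case_prod_beta by (rule measurable_fun_upd[where J=UNIV]) auto
  have "(\<lambda>(X, x). X(i := x)) \<in> measurable (?P \<Otimes>\<^sub>M R) ?P"
    using measurable_add_dim[where I=UNIV and M="\<lambda>_. R" and i=i] by simp
  moreover have "(\<integral>\<^sup>+y. G y \<partial>?P) = (\<integral>\<^sup>+X. \<integral>\<^sup>+x. G (X(i := x)) \<partial>R \<partial>?P)"
    if G: "G \<in> borel_measurable ?P" for G
  proof -
    have "(\<integral>\<^sup>+y. G y \<partial>?P) = (\<integral>\<^sup>+z. G (case z of (x, X) \<Rightarrow> X(i := x)) \<partial>(R \<Otimes>\<^sub>M ?P))"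
      using G m by (subst (1) distr[symmetric]) (simp add: nn_integral_distr)
    also have "\<dots> = (\<integral>\<^sup>+X. \<integral>\<^sup>+x. G (X(i := x)) \<partial>R \<partial>?P)"
      using G m by (subst RP.nn_integral_snd[symmetric]) (auto simp: case_prod_beta)
    finally show ?thesis .
  qed
  ultimately show ?thesis unfolding resampling_invariant_def by blast
qed

lemma resampling_invariant_pair_snd:
  assumes "sigma_finite_measure M" "sigma_finite_measure N" "sigma_finite_measure P"
    and inv: "resampling_invariant N P T"
  shows "resampling_invariant (M \<Otimes>\<^sub>M N) P (\<lambda>(x, y) p. (x, T y p))"
proof -
  interpret M: sigma_finite_measure M by fact
  interpret N: sigma_finite_measure N by fact
  interpret P: sigma_finite_measure P by fact
  have T: "(\<lambda>(y, p). T y p) \<in> measurable (N \<Otimes>\<^sub>M P) N"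
    using inv by (simp add: resampling_invariant_def)
  have m: "(\<lambda>(w, p). case w of (x, y) \<Rightarrow> (x, T y p)) \<in> measurable ((M \<Otimes>\<^sub>M N) \<Otimes>\<^sub>M P) (M \<Otimes>\<^sub>M N)"
  proof -
    have "(\<lambda>q. (snd (fst q), snd q)) \<in> measurable ((M \<Otimes>\<^sub>M N) \<Otimes>\<^sub>M P) (N \<Otimes>\<^sub>M P)"
      by (intro measurable_Pair) simp_all
    from measurable_comp[OF this T]
    have "(\<lambda>q. (fst (fst q), (\<lambda>(y, p). T y p) (snd (fst q), snd q)))
        \<in> measurable ((M \<Otimes>\<^sub>M N) \<Otimes>\<^sub>M P) (M \<Otimes>\<^sub>M N)"
      by (intro measurable_Pair) (simp_all add: o_def)
    then show ?thesis by (simp add: case_prod_beta')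
  qed
  have "(\<integral>\<^sup>+w. G w \<partial>(M \<Otimes>\<^sub>M N)) = (\<integral>\<^sup>+w. \<integral>\<^sup>+p. G (case w of (x, y) \<Rightarrow> (x, T y p)) \<partial>P \<partial>(M \<Otimes>\<^sub>M N))"
    if G[measurable]: "G \<in> borel_measurable (M \<Otimes>\<^sub>M N)" for G
  proof -
    have "(\<integral>\<^sup>+w. G w \<partial>(M \<Otimes>\<^sub>M N)) = (\<integral>\<^sup>+x. \<integral>\<^sup>+y. G (x, y) \<partial>N \<partial>M)"
      by (rule N.nn_integral_fst[symmetric]) simp
    also have "\<dots> = (\<integral>\<^sup>+x. \<integral>\<^sup>+y. \<integral>\<^sup>+p. G (x, T y p) \<partial>P \<partial>N \<partial>M)"
    proof (rule nn_integral_cong)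
      fix x assume "x \<in> space M"
      then have "(\<lambda>y. G (x, y)) \<in> borel_measurable N" by simp
      then show "(\<integral>\<^sup>+y. G (x, y) \<partial>N) = (\<integral>\<^sup>+y. \<integral>\<^sup>+p. G (x, T y p) \<partial>P \<partial>N)"
        using inv by (simp add: resampling_invariant_def)
    qed
    also have "\<dots> = (\<integral>\<^sup>+w. (\<lambda>(x, y). \<integral>\<^sup>+p. G (x, T y p) \<partial>P) w \<partial>(M \<Otimes>\<^sub>M N))"
    proof -
      have "(\<lambda>(w, p). G (case w of (x, y) \<Rightarrow> (x, T y p))) \<in> borel_measurable ((M \<Otimes>\<^sub>M N) \<Otimes>\<^sub>M P)"
        using measurable_comp[OF m G] by (simp add: o_def case_prod_beta)
      from P.borel_measurable_nn_integral[OF this]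
      have "(\<lambda>(x, y). \<integral>\<^sup>+p. G (x, T y p) \<partial>P) \<in> borel_measurable (M \<Otimes>\<^sub>M N)"
        by (simp add: case_prod_beta)
      from N.nn_integral_fst[OF this] show ?thesis by simp
    qed
    finally show ?thesis by (simp add: case_prod_beta)
  qed
  with m show ?thesis unfolding resampling_invariant_def by (simp add: case_prod_unfold)
qed

lemma resampling_invariant_pair_fst:
  assumes "sigma_finite_measure M" "sigma_finite_measure N" "sigma_finite_measure P"
    and inv: "resampling_invariant M P T"
  shows "resampling_invariant (M \<Otimes>\<^sub>M N) P (\<lambda>(x, y) p. (T x p, y))"
proof -
  interpret M: sigma_finite_measure M by fact
  interpret N: sigma_finite_measure N by fact
  interpret P: sigma_finite_measure P by fact
  interpret MN: pair_sigma_finite M N by unfold_locales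
  have T: "(\<lambda>(x, p). T x p) \<in> measurable (M \<Otimes>\<^sub>M P) M"
    using inv by (simp add: resampling_invariant_def)
  have m: "(\<lambda>(w, p). case w of (x, y) \<Rightarrow> (T x p, y)) \<in> measurable ((M \<Otimes>\<^sub>M N) \<Otimes>\<^sub>M P) (M \<Otimes>\<^sub>M N)"
  proof -
    have "(\<lambda>q. (fst (fst q), snd q)) \<in> measurable ((M \<Otimes>\<^sub>M N) \<Otimes>\<^sub>M P) (M \<Otimes>\<^sub>M P)"
      by (intro measurable_Pair) simp_all
    from measurable_comp[OF this T]
    have "(\<lambda>q. ((\<lambda>(x, p). T x p) (fst (fst q), snd q), snd (fst q)))
        \<in> measurable ((M \<Otimes>\<^sub>M N) \<Otimes>\<^sub>M P) (M \<Otimes>\<^sub>M N)"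
      by (intro measurable_Pair) (simp_all add: o_def)
    then show ?thesis by (simp add: case_prod_beta')
  qed
  have "(\<integral>\<^sup>+w. G w \<partial>(M \<Otimes>\<^sub>M N)) = (\<integral>\<^sup>+w. \<integral>\<^sup>+p. G (case w of (x, y) \<Rightarrow> (T x p, y)) \<partial>P \<partial>(M \<Otimes>\<^sub>M N))"
    if G[measurable]: "G \<in> borel_measurable (M \<Otimes>\<^sub>M N)" for G
  proof -
    have "(\<integral>\<^sup>+w. G w \<partial>(M \<Otimes>\<^sub>M N)) = (\<integral>\<^sup>+y. \<integral>\<^sup>+x. G (x, y) \<partial>M \<partial>N)"
      by (rule MN.nn_integral_snd[symmetric]) simp
    also have "\<dots> = (\<integral>\<^sup>+y. \<integral>\<^sup>+x. \<integral>\<^sup>+p. G (T x p, y) \<partial>P \<partial>M \<partial>N)"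
    proof (rule nn_integral_cong)
      fix y assume "y \<in> space N"
      then have "(\<lambda>x. G (x, y)) \<in> borel_measurable M" by simp
      then show "(\<integral>\<^sup>+x. G (x, y) \<partial>M) = (\<integral>\<^sup>+x. \<integral>\<^sup>+p. G (T x p, y) \<partial>P \<partial>M)"
        using inv by (simp add: resampling_invariant_def)
    qed
    also have "\<dots> = (\<integral>\<^sup>+w. (\<lambda>(x, y). \<integral>\<^sup>+p. G (T x p, y) \<partial>P) w \<partial>(M \<Otimes>\<^sub>M N))"
    proof -
      have "(\<lambda>(w, p). G (case w of (x, y) \<Rightarrow> (T x p, y))) \<in> borel_measurable ((M \<Otimes>\<^sub>M N) \<Otimes>\<^sub>M P)"
        using measurable_comp[OF m G] by (simp add: o_def case_prod_beta)
      from P.borel_measurable_nn_integral[OF this]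
      have "(\<lambda>(x, y). \<integral>\<^sup>+p. G (T x p, y) \<partial>P) \<in> borel_measurable (M \<Otimes>\<^sub>M N)"
        by (simp add: case_prod_beta)
      from MN.nn_integral_snd[OF this] show ?thesis by simp
    qed
    finally show ?thesis by (simp add: case_prod_beta)
  qed
  with m show ?thesis unfolding resampling_invariant_def by (simp add: case_prod_unfold)
qed

lemma resampling_invariant_coupled_fst:
  fixes \<nu> :: "'a measure" and R :: "'b measure" and Q :: "'c measure" and i :: 'i
  assumes \<nu>: "prob_space \<nu>" and R: "prob_space R" and Q: "prob_space Q"
  shows "resampling_invariant (\<nu> \<Otimes>\<^sub>M (PiM UNIV (\<lambda>_::'i. R) \<Otimes>\<^sub>M PiM UNIV (\<lambda>_::'i. Q))) R
           (\<lambda>\<omega> p. (fst \<omega>, (fst (snd \<omega>))(i := p), snd (snd \<omega>)))"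
proof -
  have PR: "prob_space (PiM (UNIV::'i set) (\<lambda>_. R))" and PQ: "prob_space (PiM (UNIV::'i set) (\<lambda>_. Q))"
    by (intro prob_space_PiM R Q)+
  note sf = prob_space_imp_sigma_finite
  have "resampling_invariant (PiM UNIV (\<lambda>_::'i. R) \<Otimes>\<^sub>M PiM UNIV (\<lambda>_::'i. Q)) R (\<lambda>(x, y) p. (x(i := p), y))"
    by (rule resampling_invariant_pair_fst[OF sf[OF PR] sf[OF PQ] sf[OF R] resampling_invariant_PiM[OF R]])
  from resampling_invariant_pair_snd[OF sf[OF \<nu>] sf[OF prob_space_pair[OF PR PQ]] sf[OF R] this]
  show ?thesis by (simp add: case_prod_beta')
qed

lemma resampling_invariant_coupled_snd:
  fixes \<nu> :: "'a measure" and R :: "'b measure" and Q :: "'c measure" and i :: 'i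
  assumes \<nu>: "prob_space \<nu>" and R: "prob_space R" and Q: "prob_space Q"
  shows "resampling_invariant (\<nu> \<Otimes>\<^sub>M (PiM UNIV (\<lambda>_::'i. R) \<Otimes>\<^sub>M PiM UNIV (\<lambda>_::'i. Q))) Q
           (\<lambda>\<omega> p. (fst \<omega>, fst (snd \<omega>), (snd (snd \<omega>))(i := p)))"
proof -
  have PR: "prob_space (PiM (UNIV::'i set) (\<lambda>_. R))" and PQ: "prob_space (PiM (UNIV::'i set) (\<lambda>_. Q))"
    by (intro prob_space_PiM R Q)+
  note sf = prob_space_imp_sigma_finite
  have "resampling_invariant (PiM UNIV (\<lambda>_::'i. R) \<Otimes>\<^sub>M PiM UNIV (\<lambda>_::'i. Q)) Q (\<lambda>(x, y) p. (x, y(i := p)))"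
    by (rule resampling_invariant_pair_snd[OF sf[OF PR] sf[OF PQ] sf[OF Q] resampling_invariant_PiM[OF Q]])
  from resampling_invariant_pair_snd[OF sf[OF \<nu>] sf[OF prob_space_pair[OF PR PQ]] sf[OF Q] this]
  show ?thesis by (simp add: case_prod_beta')
qed

section \<open>One step of the Euler scheme for a dissipative drift\<close>

lemma norm_euler_step_power2_le:
  fixes a :: "'a::real_inner \<Rightarrow> 'a"
  assumes lip: "\<And>x y. norm (a x - a y) \<le> L * norm (x - y)"
    and diss: "\<And>x y. inner (x - y) (a x - a y) \<le> - K * norm (x - y)^2"
    and K: "0 < K" and \<gamma>: "0 < \<gamma>" "\<gamma> \<le> 1" "\<gamma>*(4*L^2) \<le> K"
  shows "norm (x + \<gamma> *\<^sub>R a x)^2 \<le> (1 - \<gamma>*K)*norm x^2 + \<gamma>*(2*norm (a 0)^2/K + 2*norm (a 0)^2)"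
proof -
  define t where "t = norm x^2"
  define nx where "nx = norm x"
  define n0 where "n0 = norm (a 0)"
  have t: "t = nx^2" unfolding t_def nx_def ..
  have expand: "norm (x + \<gamma> *\<^sub>R a x)^2 = t + 2*\<gamma>*(x \<bullet> a x) + \<gamma>^2*norm (a x)^2"
    unfolding t_def by (rule power2_norm_add_scaleR)
  have inner: "x \<bullet> a x \<le> -K*t + nx*n0"
  proof -
    have "x \<bullet> (a x - a 0) \<le> -K*t" using diss[of x 0] unfolding t_def by simp
    moreover have "x \<bullet> a 0 \<le> nx*n0" unfolding nx_def n0_def by (rule norm_cauchy_schwarz)
    ultimately show ?thesis by (simp add: inner_diff_right)
  qed
  have growth: "norm (a x)^2 \<le> 2*L^2*t + 2*n0^2"
  proof -
    have "norm (a x) \<le> norm (a x - a 0) + norm (a 0)" using norm_triangle_ineq[of "a x - a 0" "a 0"] by simp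
    also have "\<dots> \<le> L*nx + n0" using lip[of x 0] unfolding nx_def n0_def by simp
    finally have "norm (a x)^2 \<le> (L*nx + n0)^2" by (intro power_mono) auto
    also have "\<dots> \<le> 2*L^2*t + 2*n0^2"
      using power2_add_le[of "L*nx" n0] unfolding t by (simp add: power_mult_distrib)
    finally show ?thesis .
  qed
  have cross: "\<gamma>*(2*n0*nx) \<le> \<gamma>*(K/2*t + 2*n0^2/K)"
  proof -
    have "2*n0*nx \<le> K/2*nx^2 + (2*n0)^2/(2*K)" by (rule mult_le_half_square_add[OF K])
    moreover have "(2*n0)^2/(2*K) = 2*n0^2/K" using K by (simp add: power2_eq_square field_simps)
    ultimately show ?thesis using \<gamma> unfolding t by (intro mult_left_mono) auto
  qed
  have small_lip: "\<gamma>^2*(2*L^2*t) \<le> \<gamma>*(K/2*t)"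
  proof -
    have "\<gamma>^2*(2*L^2*t) = \<gamma>*((\<gamma>*(4*L^2))/2*t)" by (simp add: power2_eq_square)
    also have "\<dots> \<le> \<gamma>*(K/2*t)" using \<gamma> unfolding t by (intro mult_left_mono mult_right_mono) auto
    finally show ?thesis .
  qed
  have small_offset: "\<gamma>^2*(2*n0^2) \<le> \<gamma>*(2*n0^2)"
    using \<gamma> by (intro mult_right_mono) (auto simp: power2_eq_square mult_left_le_one_le)
  have "2*\<gamma>*(x \<bullet> a x) \<le> 2*\<gamma>*(-K*t + nx*n0)" using inner \<gamma> by (intro mult_left_mono) auto
  moreover have "\<gamma>^2*norm (a x)^2 \<le> \<gamma>^2*(2*L^2*t + 2*n0^2)" using growth by (intro mult_left_mono) auto
  ultimately have "norm (x + \<gamma> *\<^sub>R a x)^2 \<le> t + 2*\<gamma>*(-K*t) + \<gamma>*(K/2*t + 2*n0^2/K) + \<gamma>*(K/2*t) + \<gamma>*(2*n0^2)"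
    using expand cross small_lip small_offset by (simp add: algebra_simps)
  also have "\<dots> = (1 - \<gamma>*K)*t + \<gamma>*(2*n0^2/K + 2*n0^2)" by (simp add: algebra_simps)
  finally show ?thesis unfolding t_def n0_def .
qed

lemma norm_euler_step_diff_power2_le:
  fixes a :: "'a::real_inner \<Rightarrow> 'a"
  assumes lip: "\<And>x y. norm (a x - a y) \<le> L * norm (x - y)"
    and diss: "\<And>x y. inner (x - y) (a x - a y) \<le> - K * norm (x - y)^2"
    and \<gamma>: "0 < \<gamma>" "\<gamma>*L^2 \<le> K"
  shows "norm ((y - x) + \<gamma> *\<^sub>R (a y - a x))^2 \<le> (1 - \<gamma>*K)*norm (y - x)^2"
proof -
  have inner: "2*\<gamma>*((y - x) \<bullet> (a y - a x)) \<le> 2*\<gamma>*(-K*norm (y - x)^2)"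
    using diss[of y x] \<gamma> by (intro mult_left_mono) auto
  have "norm (a y - a x)^2 \<le> (L*norm (y - x))^2" using lip[of y x] by (intro power_mono) auto
  then have "\<gamma>^2*norm (a y - a x)^2 \<le> \<gamma>^2*(L^2*norm (y - x)^2)"
    by (intro mult_left_mono) (auto simp: power_mult_distrib)
  also have "\<dots> = \<gamma>*((\<gamma>*L^2)*norm (y - x)^2)" by (simp add: power2_eq_square)
  also have "\<dots> \<le> \<gamma>*(K*norm (y - x)^2)" using \<gamma> by (intro mult_left_mono mult_right_mono) auto
  finally show ?thesis using inner power2_norm_add_scaleR[of "y - x" \<gamma> "a y - a x"] by (simp add: algebra_simps)
qed

text \<open>The real-arithmetic core of the one-step recursion for the fourth moment of the exact chain:
  \<open>A2\<close> bounds \<open>|x + \<gamma> a x|\<^sup>2\<close>, \<open>t = |x|\<^sup>2\<close>, \<open>bb = \<beta>\<^sup>2\<close>, \<open>c2 = bb \<gamma>/2\<close> is the variance scale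
  of the Gaussian increment, and \<open>g2\<close>, \<open>g4\<close> bound its second and fourth moments.\<close>

lemma exact_moment_recursion_arith:
  fixes \<gamma> K R bb g2 g4 t A2 c2 :: real
  assumes K: "K > 0" and \<gamma>: "0 < \<gamma>" "\<gamma> \<le> 1" "\<gamma>*K \<le> 1"
    and A2: "0 \<le> A2" "A2 \<le> (1-\<gamma>*K)*t + \<gamma>*R"
    and nonneg: "0 \<le> t" "0 \<le> R" "0 \<le> bb" "0 \<le> g2" "0 \<le> g4"
    and c2: "c2 = bb*\<gamma>/2"
  shows "A2^2 + 16*c2*g2*A2 + c2^2*(8*g2^2 + 6*g4)
     \<le> (1-\<gamma>*K/2)*t^2 + \<gamma>*((2*R+8*bb*g2)^2/(2*K) + R^2 + 8*bb*g2*R + 2*bb^2*(g2^2+g4))"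
proof -
  define e where "e = 1 - \<gamma>*K"
  have e: "0 \<le> e" "e \<le> 1" using \<gamma> K unfolding e_def by (auto simp: mult_pos_pos)
  have A2_sq_le: "A2^2 \<le> (e*t + \<gamma>*R)^2" using A2 unfolding e_def by (intro power_mono) auto
  have "e^2 * t^2 \<le> e * t^2" using e by (intro mult_right_mono) (auto simp: power2_eq_square mult_left_le_one_le)
  moreover have "e*\<gamma>*R*t \<le> \<gamma>*R*t" using e \<gamma> nonneg by (intro mult_right_mono) (auto intro!: mult_nonneg_nonneg mult_left_le_one_le)
  moreover have "\<gamma>^2*R^2 \<le> \<gamma>*R^2" using \<gamma> by (intro mult_right_mono) (auto simp: power2_eq_square mult_left_le_one_le)
  moreover have "(e*t + \<gamma>*R)^2 = e^2*t^2 + 2*(e*\<gamma>*R*t) + \<gamma>^2*R^2" by (simp add: power2_eq_square algebra_simps)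
  ultimately have A2_sq: "A2^2 \<le> e*t^2 + 2*(\<gamma>*R*t) + \<gamma>*R^2" using A2_sq_le by linarith
  have A2_le: "A2 \<le> t + R"
  proof -
    have "e*t \<le> t" using e nonneg by (simp add: mult_left_le_one_le)
    moreover have "\<gamma>*R \<le> R" using \<gamma> nonneg by (simp add: mult_left_le_one_le)
    ultimately show ?thesis using A2 unfolding e_def by linarith
  qed
  have cross: "16*c2*g2*A2 \<le> 8*bb*\<gamma>*g2*(t+R)"
  proof -
    have "16*c2*g2*A2 = (8*bb*\<gamma>*g2)*A2" using c2 by (simp add: algebra_simps)
    also have "\<dots> \<le> (8*bb*\<gamma>*g2)*(t+R)" using A2_le nonneg \<gamma> by (intro mult_left_mono) auto
    finally show ?thesis by simp
  qed
  have quartic: "c2^2*(8*g2^2 + 6*g4) \<le> \<gamma>*(bb^2*(2*g2^2+2*g4))"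
  proof -
    have "c2^2*(8*g2^2 + 6*g4) = \<gamma>^2*(bb^2*(2*g2^2 + (3/2)*g4))" unfolding c2 by (simp add: power2_eq_square field_simps)
    also have "\<dots> \<le> \<gamma>*(bb^2*(2*g2^2 + (3/2)*g4))" using \<gamma> nonneg
      by (intro mult_right_mono) (auto simp: power2_eq_square mult_left_le_one_le)
    also have "\<dots> \<le> \<gamma>*(bb^2*(2*g2^2+2*g4))" using \<gamma> nonneg
      by (intro mult_left_mono) auto
    finally show ?thesis .
  qed
  have young: "\<gamma>*((2*R+8*bb*g2)*t) \<le> \<gamma>*(K/2*t^2 + (2*R+8*bb*g2)^2/(2*K))"
    using mult_le_half_square_add[OF K] \<gamma> by (intro mult_left_mono) auto
  have "A2^2 + 16*c2*g2*A2 + c2^2*(8*g2^2 + 6*g4)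
      \<le> e*t^2 + 2*(\<gamma>*R*t) + \<gamma>*R^2 + 8*bb*\<gamma>*g2*(t+R) + \<gamma>*(bb^2*(2*g2^2+2*g4))"
    using A2_sq cross quartic by linarith
  also have "\<dots> = e*t^2 + \<gamma>*((2*R+8*bb*g2)*t) + \<gamma>*(R^2 + 8*bb*g2*R + 2*bb^2*(g2^2+g4))"
    by (simp add: algebra_simps)
  also have "\<dots> \<le> e*t^2 + \<gamma>*(K/2*t^2 + (2*R+8*bb*g2)^2/(2*K)) + \<gamma>*(R^2 + 8*bb*g2*R + 2*bb^2*(g2^2+g4))"
    using young by linarith
  also have "\<dots> = (1-\<gamma>*K/2)*t^2 + \<gamma>*((2*R+8*bb*g2)^2/(2*K) + R^2 + 8*bb*g2*R + 2*bb^2*(g2^2+g4))"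
    unfolding e_def by (simp add: algebra_simps)
  finally show ?thesis .
qed


lemma cross_term_young_le:
  fixes \<gamma> K kp rr DD dd Y2 :: real
  assumes K: "0 < K" and \<gamma>: "0 < \<gamma>" and nonneg: "0 \<le> kp" "0 < rr" "0 \<le> Y2" and DD: "DD \<le> dd"
  shows "8*\<gamma>^2*DD*(kp*rr*(1+Y2)) \<le> \<gamma>*K/2*dd^2 + \<gamma>^3*(64*kp^2/K)*rr^2*(1+Y2^2)"
proof -
  define W where "W = 8*\<gamma>^2*kp*rr*(1+Y2)"
  have "8*\<gamma>^2*DD*(kp*rr*(1+Y2)) = W*DD" unfolding W_def by (simp add: algebra_simps)
  also have "\<dots> \<le> W*dd" unfolding W_def using \<gamma> nonneg DD by (intro mult_left_mono) auto
  also have "\<dots> \<le> \<gamma>*K/2*dd^2 + W^2/(2*(\<gamma>*K))" using \<gamma> K by (intro mult_le_half_square_add) simp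
  also have "W^2/(2*(\<gamma>*K)) = \<gamma>^3*(32*kp^2/K)*rr^2*(1+Y2)^2"
    unfolding W_def using \<gamma> K by (simp add: power2_eq_square field_simps power3_eq_cube power4_eq_xxxx)
  also have "\<dots> \<le> \<gamma>^3*(32*kp^2/K)*rr^2*(2*(1+Y2^2))"
    using power2_add_le[of 1 Y2] \<gamma> K by (intro mult_left_mono) auto
  finally show ?thesis by (simp add: algebra_simps)
qed

text \<open>The same for the error between a coarse chain and the exact chain: \<open>dd = |y - x|\<^sup>2\<close>, \<open>DD\<close> bounds
  \<open>|y - x + \<gamma>(a y - a x)|\<^sup>2\<close>, \<open>Y2 = |y|\<^sup>2\<close>, \<open>X4 = |x|\<^sup>4\<close>, and \<open>kp rr\<close>, \<open>kp rr\<^sup>2\<close> bound the second and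
  fourth moments of the drift noise.\<close>

lemma error_moment_recursion_arith:
  fixes \<gamma> K kp P DD dd Y2 X4 rr :: real
  assumes K: "K > 0" and \<gamma>: "0 < \<gamma>" "\<gamma> \<le> 1" "\<gamma>*K \<le> 1" "32*\<gamma>^2*P \<le> K"
    and DD: "0 \<le> DD" "DD \<le> (1-\<gamma>*K)*dd" and dd: "0 \<le> dd"
    and kp: "0 \<le> kp" and P: "P = 64*kp^2/K + 3*kp"
    and rr: "0 < rr" "rr \<le> 1"
    and Y: "0 \<le> Y2" "Y2^2 \<le> 8*X4 + 8*dd^2"
  shows "DD^2 + 8*\<gamma>^2*DD*(kp*rr*(1+Y2)) + 3*\<gamma>^4*(kp*rr^2*(1+Y2^2))
     \<le> (1-\<gamma>*K/4)*dd^2 + \<gamma>^3*P*(1+8*X4)*rr^2"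
proof -
  define e where "e = 1 - \<gamma>*K"
  have e: "0 \<le> e" "e \<le> 1" using \<gamma> K unfolding e_def by (auto simp: mult_pos_pos)
  have P_nonneg: "0 \<le> P" unfolding P using kp K by auto
  have DD_sq: "DD^2 \<le> e*dd^2"
  proof -
    have "DD^2 \<le> (e*dd)^2" using DD unfolding e_def by (intro power_mono) auto
    also have "\<dots> = e^2*dd^2" by (simp add: power_mult_distrib)
    also have "\<dots> \<le> e*dd^2" using e by (intro mult_right_mono) (auto simp: power2_eq_square mult_left_le_one_le)
    finally show ?thesis .
  qed
  have "DD \<le> dd" using DD e dd unfolding e_def by (meson mult_left_le_one_le order_trans)
  note cross = cross_term_young_le[OF K \<gamma>(1) kp rr(1) Y(1) this]
  have quartic: "3*\<gamma>^4*(kp*rr^2*(1+Y2^2)) \<le> \<gamma>^3*(3*kp)*rr^2*(1+Y2^2)"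
  proof -
    have "3*\<gamma>^4*(kp*rr^2*(1+Y2^2)) = \<gamma>*(\<gamma>^3*(3*kp)*rr^2*(1+Y2^2))"
      by (simp add: algebra_simps power4_eq_xxxx power3_eq_cube)
    also have "\<dots> \<le> 1*(\<gamma>^3*(3*kp)*rr^2*(1+Y2^2))" using \<gamma> kp Y by (intro mult_right_mono) auto
    finally show ?thesis by simp
  qed
  have Y_bound: "\<gamma>^3*P*rr^2*(1+Y2^2) \<le> \<gamma>^3*P*rr^2*(1+8*X4+8*dd^2)"
    using Y \<gamma> P_nonneg by (intro mult_left_mono) auto
  have absorb: "\<gamma>^3*P*rr^2*(8*dd^2) \<le> (\<gamma>*K/4)*dd^2"
  proof -
    have "\<gamma>^3*P*rr^2*(8*dd^2) = (\<gamma>*dd^2)*((8*\<gamma>^2*P)*rr^2)"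
      by (simp add: algebra_simps power2_eq_square power3_eq_cube)
    also have "\<dots> \<le> (\<gamma>*dd^2)*((K/4)*1)"
    proof (intro mult_left_mono mult_mono)
      show "rr^2 \<le> 1" using rr by (simp add: power_le_one)
    qed (use \<gamma> K P_nonneg in auto)
    finally show ?thesis by (simp add: mult_ac)
  qed
  have P_split: "\<gamma>^3*(64*kp^2/K)*rr^2*(1+Y2^2) + \<gamma>^3*(3*kp)*rr^2*(1+Y2^2) = \<gamma>^3*P*rr^2*(1+Y2^2)"
    unfolding P by (simp add: algebra_simps)
  have "DD^2 + 8*\<gamma>^2*DD*(kp*rr*(1+Y2)) + 3*\<gamma>^4*(kp*rr^2*(1+Y2^2))
      \<le> e*dd^2 + \<gamma>*K/2*dd^2 + \<gamma>^3*P*(1+8*X4)*rr^2 + \<gamma>^3*P*rr^2*(8*dd^2)"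
    using DD_sq cross quartic Y_bound P_split by (simp add: algebra_simps)
  also have "\<dots> \<le> (1-\<gamma>*K/4)*dd^2 + \<gamma>^3*P*(1+8*X4)*rr^2"
    using absorb unfolding e_def by (simp add: algebra_simps)
  finally show ?thesis .
qed

lemma coarse_chain_cong_noise:
  "(\<And>j. j \<le> 2*m \<Longrightarrow> z j = z' j) \<Longrightarrow> coarse_chain \<beta> h F x0 z m = coarse_chain \<beta> h F x0 z' m"
  by (induction m) auto

lemma coarse_chain_cong_drift:
  "(\<And>y j. j < 2*m \<Longrightarrow> F y j = F' y j) \<Longrightarrow> coarse_chain \<beta> h F x0 z m = coarse_chain \<beta> h F' x0 z m"
  by (induction m) auto

lemma measurable_coarse_chain:
  assumes F: "\<And>j f. f \<in> borel_measurable M \<Longrightarrow> (\<lambda>\<omega>. F \<omega> (f \<omega>) j) \<in> borel_measurable M"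
    and x0: "x0 \<in> borel_measurable M" and z: "\<And>j. (\<lambda>\<omega>. z \<omega> j) \<in> borel_measurable M"
  shows "(\<lambda>\<omega>. coarse_chain \<beta> h (F \<omega>) (x0 \<omega>) (z \<omega>) m) \<in> borel_measurable M"
proof (induction m)
  case 0
  show ?case using x0 by simp
next
  case (Suc m)
  show ?case
    by (simp only: coarse_chain.simps, intro borel_measurable_add borel_measurable_scaleR
        borel_measurable_const Suc F z)
qed

definition coupled_borel :: "((real^'d) \<times> (nat \<Rightarrow> real^'d) \<times> (nat \<Rightarrow> real^'n)) measure" where
  "coupled_borel = borel \<Otimes>\<^sub>M (PiM UNIV (\<lambda>_. borel) \<Otimes>\<^sub>M PiM UNIV (\<lambda>_. borel))"

lemma sets_coupled_space:
  assumes "sets \<nu> = sets borel" "sets (Q (2 * s)) = sets borel"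
  shows "sets (coupled_space \<nu> Q s) = sets coupled_borel"
  unfolding coupled_space_def coupled_borel_def
  by (intro sets_pair_measure_cong assms sets_PiM_cong refl) (simp_all add: sets_std_gauss_vec assms)

locale coupled_chains =
  fixes a :: "real^'d \<Rightarrow> real^'d"
    and b :: "real^'d \<Rightarrow> real^'n \<Rightarrow> real^'d"
    and Q :: "nat \<Rightarrow> (real^'n) measure"
    and \<nu> :: "(real^'d) measure"
    and \<beta> L K \<kappa> :: real
  assumes beta: "0 \<le> \<beta>"
    and laws: "\<And>s. 1 \<le> s \<Longrightarrow> prob_space (Q s) \<and> sets (Q s) = sets borel"
    and b_meas: "(\<lambda>(x, u). b x u) \<in> borel_measurable (borel \<Otimes>\<^sub>M borel)"
    and unbiased: "\<And>s x. 1 \<le> s \<Longrightarrow> integrable (Q s) (\<lambda>u. b x u) \<and> (\<integral>u. b x u \<partial>Q s) = a x"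
    and a_meas: "a \<in> borel_measurable borel"
    and lip: "\<And>x y. norm (a x - a y) \<le> L * norm (x - y)"
    and K: "0 < K"
    and diss: "\<And>x y. inner (x - y) (a x - a y) \<le> - K * norm (x - y)^2"
    and kappa: "0 \<le> \<kappa>"
    and noise2: "\<And>s x. 1 \<le> s \<Longrightarrow>
      (\<integral>\<^sup>+u. ennreal (norm (b x u - a x)^2) \<partial>Q s) \<le> ennreal (\<kappa> / real s * (1 + norm x^2))"
    and noise4: "\<And>s x. 1 \<le> s \<Longrightarrow>
      (\<integral>\<^sup>+u. ennreal (norm (b x u - a x)^4) \<partial>Q s) \<le> ennreal (\<kappa> / (real s)^2 * (1 + norm x^4))"
    and init_law: "prob_space \<nu>" "sets \<nu> = sets borel"
    and init_moment: "(\<integral>\<^sup>+x. ennreal (norm x^4) \<partial>\<nu>) < \<infinity>"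
begin

definition exact_chain :: "real \<Rightarrow> nat \<Rightarrow> (real^'d) \<times> (nat \<Rightarrow> real^'d) \<times> (nat \<Rightarrow> real^'n) \<Rightarrow> real^'d" where
  "exact_chain h m \<omega> = coarse_chain \<beta> h (\<lambda>y j. a y) (fst \<omega>) (fst (snd \<omega>)) m"

text \<open>\<open>drift_chain h 0\<close> is \<open>X\<^sup>f\<^sup>,\<^sup>c\<^sup>-\<close> (drift variables at even times) and \<open>drift_chain h 1\<close> is
  \<open>X\<^sup>f\<^sup>,\<^sup>c\<^sup>+\<close> (drift variables at odd times), both at time \<open>2m\<close>.\<close>

definition drift_chain :: "real \<Rightarrow> nat \<Rightarrow> nat \<Rightarrow> (real^'d) \<times> (nat \<Rightarrow> real^'d) \<times> (nat \<Rightarrow> real^'n) \<Rightarrow> real^'d" where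
  "drift_chain h \<delta> m \<omega> = coarse_chain \<beta> h (\<lambda>y j. b y (snd (snd \<omega>) (j + \<delta>))) (fst \<omega>) (fst (snd \<omega>)) m"

definition drift_offset :: real where
  "drift_offset = 2*norm (a 0)^2/K + 2*norm (a 0)^2"

definition exact_growth_const :: real where
  "exact_growth_const = (2*drift_offset + 8*\<beta>^2*real CARD('d))^2/(2*K) + drift_offset^2
     + 8*\<beta>^2*real CARD('d)*drift_offset + 2*(\<beta>^2)^2*(real CARD('d)^2 + 3*real CARD('d)^2)"

definition exact_moment_bound :: real where
  "exact_moment_bound = max (enn2real (\<integral>\<^sup>+x. ennreal (norm x^4) \<partial>\<nu>)) (2*exact_growth_const/K)"

definition error_const :: real where
  "error_const = 64*\<kappa>^2/K + 3*\<kappa>"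

definition error_increment :: "nat \<Rightarrow> real \<Rightarrow> real" where
  "error_increment s h = (2*h)^3*error_const/real (2 * s)^2"

definition error_rate :: real where
  "error_rate = 4*error_const*(1 + 8*exact_moment_bound)/K"

definition step_admissible :: "real \<Rightarrow> bool" where
  "step_admissible \<gamma> \<longleftrightarrow> \<gamma> \<le> 1 \<and> \<gamma>*K \<le> 1 \<and> \<gamma>*(4*L^2) \<le> K \<and> 32*\<gamma>^2*error_const \<le> K"

lemma drift_offset_nonneg: "0 \<le> drift_offset"
  using K by (simp add: drift_offset_def)

lemma exact_growth_const_nonneg: "0 \<le> exact_growth_const"
  using K drift_offset_nonneg by (simp add: exact_growth_const_def)

lemma error_const_nonneg: "0 \<le> error_const"
  using K kappa by (simp add: error_const_def)

lemma init_moment_le_exact_moment_bound: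
  "(\<integral>\<^sup>+x. ennreal (norm x^4) \<partial>\<nu>) \<le> ennreal exact_moment_bound"
proof -
  have "(\<integral>\<^sup>+x. ennreal (norm x^4) \<partial>\<nu>) = ennreal (enn2real (\<integral>\<^sup>+x. ennreal (norm x^4) \<partial>\<nu>))"
    using init_moment by (simp add: less_top[symmetric])
  then show ?thesis unfolding exact_moment_bound_def by (metis ennreal_leI max.cobounded1)
qed

lemma exact_moment_bound_nonneg: "0 \<le> exact_moment_bound"
  unfolding exact_moment_bound_def by (rule max.coboundedI1) (rule enn2real_nonneg)

lemma error_increment_nonneg: "0 \<le> h \<Longrightarrow> 0 \<le> error_increment s h"
  using error_const_nonneg by (simp add: error_increment_def)

lemma error_rate_nonneg: "0 \<le> error_rate"
  using K error_const_nonneg exact_moment_bound_nonneg by (simp add: error_rate_def)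

lemma eventually_step_admissible: "eventually step_admissible (at_right 0)"
proof -
  have small: "eventually (\<lambda>\<gamma>. f \<gamma> \<le> e) (at_right 0)"
    if "(f \<longlongrightarrow> 0) (at_right 0)" "0 < e" for f :: "real \<Rightarrow> real" and e
    using order_tendstoD(2)[OF that] by (auto elim: eventually_mono)
  show ?thesis unfolding step_admissible_def
    by (intro eventually_conj small K zero_less_one) (auto intro!: tendsto_eq_intros)
qed

lemma measurable_b_comp:
  "f \<in> borel_measurable M \<Longrightarrow> g \<in> borel_measurable M \<Longrightarrow> (\<lambda>\<omega>. b (f \<omega>) (g \<omega>)) \<in> borel_measurable M"
  using measurable_compose[OF measurable_Pair b_meas, of f M g] by simp

lemma exact_chain_measurable [measurable]: "exact_chain h m \<in> borel_measurable coupled_borel"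
proof -
  have "(\<lambda>\<omega>. coarse_chain \<beta> h ((\<lambda>\<omega> y j. a y) \<omega>) (fst \<omega>) (fst (snd \<omega>)) m) \<in> borel_measurable coupled_borel"
    by (rule measurable_coarse_chain) (auto intro: measurable_compose[OF _ a_meas] simp: coupled_borel_def)
  then show ?thesis unfolding exact_chain_def[abs_def] by simp
qed

lemma drift_chain_measurable [measurable]: "drift_chain h \<delta> m \<in> borel_measurable coupled_borel"
proof -
  have "(\<lambda>\<omega>. coarse_chain \<beta> h ((\<lambda>\<omega> y j. b y (snd (snd \<omega>) (j + \<delta>))) \<omega>) (fst \<omega>) (fst (snd \<omega>)) m)
      \<in> borel_measurable coupled_borel"
    by (rule measurable_coarse_chain) (auto intro!: measurable_b_comp simp: coupled_borel_def)
  then show ?thesis unfolding drift_chain_def[abs_def] by simp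
qed

lemma exact_chain_resample_noise:
  "exact_chain h (Suc m) (fst \<omega>, ((fst (snd \<omega>))(2*m+1 := p1))(2*m+2 := p2), snd (snd \<omega>))
     = exact_chain h m \<omega> + (2*h) *\<^sub>R a (exact_chain h m \<omega>) + (\<beta> * sqrt h) *\<^sub>R (p1 + p2)"
proof -
  have "coarse_chain \<beta> h (\<lambda>y j. a y) (fst \<omega>) (((fst (snd \<omega>))(2*m+1 := p1))(2*m+2 := p2)) m
      = coarse_chain \<beta> h (\<lambda>y j. a y) (fst \<omega>) (fst (snd \<omega>)) m"
    by (rule coarse_chain_cong_noise) auto
  then show ?thesis unfolding exact_chain_def by simp
qed

lemma drift_chain_resample_drift:
  "drift_chain h \<delta> (Suc m) (fst \<omega>, fst (snd \<omega>), (snd (snd \<omega>))(2*m+\<delta> := v))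
     = drift_chain h \<delta> m \<omega> + (2*h) *\<^sub>R b (drift_chain h \<delta> m \<omega>) v
       + (\<beta> * sqrt h) *\<^sub>R (fst (snd \<omega>) (2*m+1) + fst (snd \<omega>) (2*m+2))"
proof -
  have "coarse_chain \<beta> h (\<lambda>y j. b y (((snd (snd \<omega>))(2*m+\<delta> := v)) (j + \<delta>))) (fst \<omega>) (fst (snd \<omega>)) m
      = coarse_chain \<beta> h (\<lambda>y j. b y (snd (snd \<omega>) (j + \<delta>))) (fst \<omega>) (fst (snd \<omega>)) m"
    by (rule coarse_chain_cong_drift) auto
  then show ?thesis unfolding drift_chain_def by simp
qed

lemma average_minus_exact:
  "Xbar_fc \<beta> h b k \<omega> - Xc \<beta> h a k \<omega> = (1/2) *\<^sub>R
     ((drift_chain h 0 (k div 2) \<omega> - exact_chain h (k div 2) \<omega>)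
      + (drift_chain h 1 (k div 2) \<omega> - exact_chain h (k div 2) \<omega>))"
proof -
  have "Xfcm \<beta> h b k \<omega> = drift_chain h 0 (k div 2) \<omega>" "Xfcp \<beta> h b k \<omega> = drift_chain h 1 (k div 2) \<omega>"
    "Xc \<beta> h a k \<omega> = exact_chain h (k div 2) \<omega>"
    unfolding Xfcm_def Xfcp_def Xc_def drift_chain_def exact_chain_def by (auto split: prod.splits)
  then show ?thesis unfolding Xbar_fc_def by (simp add: algebra_simps)
qed

context
  fixes s :: nat
  assumes s: "1 \<le> s"
begin

abbreviation \<Omega> :: "((real^'d) \<times> (nat \<Rightarrow> real^'d) \<times> (nat \<Rightarrow> real^'n)) measure" where
  "\<Omega> \<equiv> coupled_space \<nu> Q s"

lemma drift_law: "prob_space (Q (2 * s))" "sets (Q (2 * s)) = sets borel"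
  using laws[of "2 * s"] s by auto

lemma prob_space_coupled: "prob_space \<Omega>"
  unfolding coupled_space_def
  by (intro prob_space_pair prob_space_PiM init_law prob_space_std_gauss_vec drift_law)

lemma measurable_coupled_space: "f \<in> borel_measurable coupled_borel \<Longrightarrow> f \<in> borel_measurable \<Omega>"
  using measurable_cong_sets[OF sets_coupled_space[of \<nu> Q s, OF init_law(2) drift_law(2)] refl] by blast

lemma drift_noise_centered:
  "integrable (Q (2 * s)) (\<lambda>u. A \<bullet> (b y u - a y)) \<and> (\<integral>u. A \<bullet> (b y u - a y) \<partial>Q (2 * s)) = 0"
proof -
  interpret Q: prob_space "Q (2 * s)" by (rule drift_law)
  have b: "integrable (Q (2 * s)) (\<lambda>u. b y u)" "(\<integral>u. b y u \<partial>Q (2 * s)) = a y"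
    using unbiased[of "2 * s" y] s by auto
  then have "integrable (Q (2 * s)) (\<lambda>u. A \<bullet> b y u - A \<bullet> a y)" by auto
  moreover have "(\<integral>u. A \<bullet> b y u - A \<bullet> a y \<partial>Q (2 * s)) = 0"
    using b by (simp add: Q.prob_space)
  ultimately show ?thesis by (simp add: inner_diff_right)
qed

lemma nn_integral_exact_chain_0:
  "(\<integral>\<^sup>+\<omega>. ennreal (norm (exact_chain h 0 \<omega>)^4) \<partial>\<Omega>) = (\<integral>\<^sup>+x. ennreal (norm x^4) \<partial>\<nu>)"
proof -
  let ?N = "PiM UNIV (\<lambda>_. std_gauss_vec :: (real^'d) measure) \<Otimes>\<^sub>M PiM UNIV (\<lambda>_. Q (2 * s))"
  interpret N: prob_space ?N by (intro prob_space_pair prob_space_PiM prob_space_std_gauss_vec drift_law)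
  have "(\<lambda>x::real^'d. ennreal (norm x^4)) \<in> borel_measurable borel" by measurable
  then have "(\<lambda>x. ennreal (norm x^4)) \<in> borel_measurable \<nu>"
    using measurable_cong_sets[OF init_law(2) refl] by blast
  then have "(\<lambda>\<omega>. ennreal (norm (fst \<omega>)^4)) \<in> borel_measurable (\<nu> \<Otimes>\<^sub>M ?N)" by measurable
  from N.nn_integral_fst[OF this, symmetric] show ?thesis
    unfolding coupled_space_def exact_chain_def by (simp add: N.emeasure_space_1)
qed

context
  fixes h :: real
  assumes h: "0 < h" and step: "step_admissible (2*h)"
begin

lemma exact_step_moment_le:
  "(\<integral>\<^sup>+p1. \<integral>\<^sup>+p2. ennreal (norm (x + (2*h) *\<^sub>R a x + (\<beta> * sqrt h) *\<^sub>R (p1 + p2))^4)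
      \<partial>std_gauss_vec \<partial>std_gauss_vec)
    \<le> ennreal ((1 - h*K) * norm x^4 + 2*h*exact_growth_const)"
proof -
  define A where "A = x + (2*h) *\<^sub>R a x"
  define c where "c = \<beta> * sqrt h"
  have \<gamma>: "2*h \<le> 1" "2*h*K \<le> 1" "2*h*(4*L^2) \<le> K" using step by (auto simp: step_admissible_def)
  have A2: "norm A^2 \<le> (1 - 2*h*K)*norm x^2 + 2*h*drift_offset"
    unfolding A_def drift_offset_def using \<gamma> h by (intro norm_euler_step_power2_le[OF lip diss K]) auto
  have c2: "c^2 = \<beta>^2*(2*h)/2" unfolding c_def using h by (simp add: power_mult_distrib)
  have "(norm A^2)^2 + 16*c^2*real CARD('d)*norm A^2 + (c^2)^2*(8*real CARD('d)^2 + 6*(3*real CARD('d)^2))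
      \<le> (1 - 2*h*K/2)*(norm x^2)^2 + 2*h*exact_growth_const"
    unfolding exact_growth_const_def
    by (rule exact_moment_recursion_arith[OF K _ \<gamma>(1,2) _ A2]) (use h drift_offset_nonneg in \<open>auto simp: c2\<close>)
  then have "norm A^4 + 16*c^2*real CARD('d)*norm A^2 + c^4*(8*real CARD('d)^2 + 6*(3*real CARD('d)^2))
      \<le> (1 - h*K)*norm x^4 + 2*h*exact_growth_const"
    by (simp flip: power_mult)
  with nn_integral_std_gauss_pair_power4_le[of A c] show ?thesis
    unfolding A_def c_def by (blast intro: order_trans ennreal_leI)
qed

lemma exact_chain_moment_step:
  "(\<integral>\<^sup>+\<omega>. ennreal (norm (exact_chain h (Suc m) \<omega>)^4) \<partial>\<Omega>)
    \<le> ennreal (1 - h*K) * (\<integral>\<^sup>+\<omega>. ennreal (norm (exact_chain h m \<omega>)^4) \<partial>\<Omega>) + ennreal (2*h*exact_growth_const)"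
proof -
  let ?G = "std_gauss_vec :: (real^'d) measure"
  interpret G: prob_space ?G by (rule prob_space_std_gauss_vec)
  interpret \<Omega>: prob_space \<Omega> by (rule prob_space_coupled)
  define T1 where "T1 \<omega> p = (fst \<omega>, (fst (snd \<omega>))(2*m+1 := p), snd (snd \<omega>))"
    for \<omega> :: "(real^'d) \<times> (nat \<Rightarrow> real^'d) \<times> (nat \<Rightarrow> real^'n)" and p
  define T2 where "T2 \<omega> p = (fst \<omega>, (fst (snd \<omega>))(2*m+2 := p), snd (snd \<omega>))"
    for \<omega> :: "(real^'d) \<times> (nat \<Rightarrow> real^'d) \<times> (nat \<Rightarrow> real^'n)" and p
  have inv1: "resampling_invariant \<Omega> ?G T1" and inv2: "resampling_invariant \<Omega> ?G T2"
    unfolding T1_def T2_def coupled_space_def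
    by (rule resampling_invariant_coupled_fst[OF init_law(1) prob_space_std_gauss_vec drift_law(1)])+
  define F where "F \<omega> = ennreal (norm (exact_chain h (Suc m) \<omega>)^4)" for \<omega>
  define H where "H \<omega> = (\<integral>\<^sup>+p2. F (T2 \<omega> p2) \<partial>?G)" for \<omega>
  have F_meas: "F \<in> borel_measurable \<Omega>" unfolding F_def by (rule measurable_coupled_space) measurable
  have H_meas: "H \<in> borel_measurable \<Omega>"
  proof -
    have "(\<lambda>(\<omega>, p). F (T2 \<omega> p)) \<in> borel_measurable (\<Omega> \<Otimes>\<^sub>M ?G)"
      using measurable_comp[OF inv2[unfolded resampling_invariant_def, THEN conjunct1] F_meas]
      by (simp add: o_def case_prod_beta)
    then show ?thesis unfolding H_def by (rule G.borel_measurable_nn_integral)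
  qed
  have H_T1: "H (T1 \<omega> p1) = (\<integral>\<^sup>+p2. ennreal (norm (exact_chain h m \<omega> + (2*h) *\<^sub>R a (exact_chain h m \<omega>)
      + (\<beta> * sqrt h) *\<^sub>R (p1 + p2))^4) \<partial>?G)" for \<omega> p1
  proof -
    have "T2 (T1 \<omega> p1) p2 = (fst \<omega>, ((fst (snd \<omega>))(2*m+1 := p1))(2*m+2 := p2), snd (snd \<omega>))" for p2
      unfolding T1_def T2_def by simp
    then show ?thesis by (simp only: H_def F_def exact_chain_resample_noise)
  qed
  have "(\<integral>\<^sup>+\<omega>. F \<omega> \<partial>\<Omega>) = (\<integral>\<^sup>+\<omega>. H \<omega> \<partial>\<Omega>)"
    unfolding H_def by (rule inv2[unfolded resampling_invariant_def, THEN conjunct2, rule_format, OF F_meas])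
  also have "\<dots> = (\<integral>\<^sup>+\<omega>. \<integral>\<^sup>+p1. H (T1 \<omega> p1) \<partial>?G \<partial>\<Omega>)"
    by (rule inv1[unfolded resampling_invariant_def, THEN conjunct2, rule_format, OF H_meas])
  also have "\<dots> \<le> (\<integral>\<^sup>+\<omega>. ennreal ((1 - h*K) * norm (exact_chain h m \<omega>)^4 + 0 * norm (exact_chain h m \<omega>)^4
      + 2*h*exact_growth_const) \<partial>\<Omega>)"
    unfolding H_T1 by (intro nn_integral_mono) (simp add: exact_step_moment_le)
  also have "\<dots> = ennreal (1 - h*K) * (\<integral>\<^sup>+\<omega>. ennreal (norm (exact_chain h m \<omega>)^4) \<partial>\<Omega>)
      + ennreal (2*h*exact_growth_const)"
    using step h exact_growth_const_nonneg
    by (subst \<Omega>.nn_integral_lincomb) (auto intro: measurable_coupled_space simp: step_admissible_def)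
  finally show ?thesis unfolding F_def .
qed

lemma exact_chain_moment_bound:
  "(\<integral>\<^sup>+\<omega>. ennreal (norm (exact_chain h m \<omega>)^4) \<partial>\<Omega>) \<le> ennreal exact_moment_bound"
proof (rule ennreal_linear_recurrence_le[where e="\<lambda>m. \<integral>\<^sup>+\<omega>. ennreal (norm (exact_chain h m \<omega>)^4) \<partial>\<Omega>"])
  show "(\<integral>\<^sup>+\<omega>. ennreal (norm (exact_chain h 0 \<omega>)^4) \<partial>\<Omega>) \<le> ennreal exact_moment_bound"
    unfolding nn_integral_exact_chain_0 by (rule init_moment_le_exact_moment_bound)
  have "2*exact_growth_const/K \<le> exact_moment_bound"
    unfolding exact_moment_bound_def by simp
  then have "2*h*exact_growth_const \<le> h*K*exact_moment_bound"
    using h K by (simp add: field_simps)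
  then show "(1 - h*K) * exact_moment_bound + 2*h*exact_growth_const \<le> exact_moment_bound"
    by (simp add: algebra_simps)
qed (use exact_chain_moment_step step h exact_growth_const_nonneg exact_moment_bound_nonneg
    in \<open>auto simp: step_admissible_def\<close>)

lemma drift_step_error_moment_le:
  "(\<integral>\<^sup>+u. ennreal (norm ((y - x) + (2*h) *\<^sub>R (a y - a x) + (2*h) *\<^sub>R (b y u - a y))^4) \<partial>Q (2 * s))
    \<le> ennreal ((1 - h*K/2) * norm (y - x)^4 + 8*error_increment s h * norm x^4 + error_increment s h)"
proof -
  define \<gamma> where "\<gamma> = 2*h"
  define rr where "rr = 1 / real (2 * s)"
  define D where "D = (y - x) + \<gamma> *\<^sub>R (a y - a x)"
  have \<gamma>: "0 < \<gamma>" "\<gamma> \<le> 1" "\<gamma>*K \<le> 1" "\<gamma>*(4*L^2) \<le> K" "32*\<gamma>^2*error_const \<le> K"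
    using h step by (auto simp: \<gamma>_def step_admissible_def)
  have \<gamma>L: "\<gamma>*L^2 \<le> K" using \<gamma>(1,4) by (smt (verit) mult_left_mono zero_le_power2)
  have rr: "0 < rr" "rr \<le> 1" using s by (auto simp: rr_def)
  have "(\<lambda>u. u) \<in> borel_measurable (Q (2 * s))" by (rule measurable_ident_sets[OF drift_law(2)])
  then have noise_meas: "(\<lambda>u. b y u - a y) \<in> borel_measurable (Q (2 * s))"
    by (intro borel_measurable_diff measurable_b_comp) auto
  have m2: "(\<integral>\<^sup>+u. ennreal (norm (b y u - a y)^2) \<partial>Q (2 * s)) \<le> ennreal (\<kappa>*rr*(1 + norm y^2))"
    using noise2[of "2 * s" y] s by (simp add: rr_def)
  have m4: "(\<integral>\<^sup>+u. ennreal (norm (b y u - a y)^4) \<partial>Q (2 * s)) \<le> ennreal (\<kappa>*rr^2*(1 + (norm y^2)^2))"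
    using noise4[of "2 * s" y] s by (simp add: rr_def power_divide flip: power_mult)
  have "(\<integral>\<^sup>+u. ennreal (norm (D + \<gamma> *\<^sub>R (b y u - a y))^4) \<partial>Q (2 * s))
      \<le> ennreal (norm D^4 + 8*\<gamma>^2*norm D^2*(\<kappa>*rr*(1 + norm y^2)) + 3*\<gamma>^4*(\<kappa>*rr^2*(1 + (norm y^2)^2)))"
    using kappa rr
    by (intro nn_integral_power4_norm_add_centered_le[OF drift_law(1) noise_meas drift_noise_centered m2 _ m4]) auto
  also have "\<dots> \<le> ennreal ((1 - \<gamma>*K/4)*(norm (y - x)^2)^2 + \<gamma>^3*error_const*(1 + 8*norm x^4)*rr^2)"
  proof (rule ennreal_leI)
    have DD: "norm D^2 \<le> (1 - \<gamma>*K)*norm (y - x)^2"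
      unfolding D_def by (rule norm_euler_step_diff_power2_le[OF lip diss \<gamma>(1) \<gamma>L])
    have "norm y^4 \<le> (norm x + norm (y - x))^4"
      using norm_triangle_ineq[of x "y - x"] by (intro power_mono) auto
    also have "\<dots> \<le> 8*norm x^4 + 8*norm (y - x)^4" by (rule power4_add_le)
    finally have Y: "(norm y^2)^2 \<le> 8*norm x^4 + 8*(norm (y - x)^2)^2" by (simp flip: power_mult)
    from error_moment_recursion_arith[OF K \<gamma>(1,2,3,5) _ DD _ kappa error_const_def rr _ Y]
    show "norm D^4 + 8*\<gamma>^2*norm D^2*(\<kappa>*rr*(1 + norm y^2)) + 3*\<gamma>^4*(\<kappa>*rr^2*(1 + (norm y^2)^2))
        \<le> (1 - \<gamma>*K/4)*(norm (y - x)^2)^2 + \<gamma>^3*error_const*(1 + 8*norm x^4)*rr^2"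
      by (simp flip: power_mult)
  qed
  also have "\<dots> = ennreal ((1 - h*K/2) * norm (y - x)^4 + 8*error_increment s h * norm x^4 + error_increment s h)"
    unfolding error_increment_def \<gamma>_def rr_def by (simp add: algebra_simps power_divide flip: power_mult)
  finally show ?thesis unfolding D_def \<gamma>_def by (simp add: algebra_simps)
qed

lemma drift_error_step:
  "(\<integral>\<^sup>+\<omega>. ennreal (norm (drift_chain h \<delta> (Suc m) \<omega> - exact_chain h (Suc m) \<omega>)^4) \<partial>\<Omega>)
    \<le> ennreal (1 - h*K/2) * (\<integral>\<^sup>+\<omega>. ennreal (norm (drift_chain h \<delta> m \<omega> - exact_chain h m \<omega>)^4) \<partial>\<Omega>)
      + ennreal (8*error_increment s h) * (\<integral>\<^sup>+\<omega>. ennreal (norm (exact_chain h m \<omega>)^4) \<partial>\<Omega>)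
      + ennreal (error_increment s h)"
proof -
  interpret \<Omega>: prob_space \<Omega> by (rule prob_space_coupled)
  define T where "T \<omega> p = (fst \<omega>, fst (snd \<omega>), (snd (snd \<omega>))(2*m+\<delta> := p))"
    for \<omega> :: "(real^'d) \<times> (nat \<Rightarrow> real^'d) \<times> (nat \<Rightarrow> real^'n)" and p
  have inv: "resampling_invariant \<Omega> (Q (2 * s)) T"
    unfolding T_def coupled_space_def
    by (rule resampling_invariant_coupled_snd[OF init_law(1) prob_space_std_gauss_vec drift_law(1)])
  have diff: "drift_chain h \<delta> (Suc m) (T \<omega> p) - exact_chain h (Suc m) (T \<omega> p)
      = (Y - X) + (2*h) *\<^sub>R (a Y - a X) + (2*h) *\<^sub>R (b Y p - a Y)"
    if "Y = drift_chain h \<delta> m \<omega>" "X = exact_chain h m \<omega>" for \<omega> p Y X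
    unfolding T_def that drift_chain_resample_drift by (simp add: exact_chain_def algebra_simps)
  have "(\<integral>\<^sup>+\<omega>. ennreal (norm (drift_chain h \<delta> (Suc m) \<omega> - exact_chain h (Suc m) \<omega>)^4) \<partial>\<Omega>)
      = (\<integral>\<^sup>+\<omega>. \<integral>\<^sup>+p. ennreal (norm (drift_chain h \<delta> (Suc m) (T \<omega> p) - exact_chain h (Suc m) (T \<omega> p))^4)
          \<partial>Q (2 * s) \<partial>\<Omega>)"
    by (rule inv[unfolded resampling_invariant_def, THEN conjunct2, rule_format])
      (rule measurable_coupled_space, measurable)
  also have "\<dots> \<le> (\<integral>\<^sup>+\<omega>. ennreal ((1 - h*K/2) * norm (drift_chain h \<delta> m \<omega> - exact_chain h m \<omega>)^4
      + 8*error_increment s h * norm (exact_chain h m \<omega>)^4 + error_increment s h) \<partial>\<Omega>)"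
    by (intro nn_integral_mono) (simp add: diff drift_step_error_moment_le)
  also have "\<dots> = ennreal (1 - h*K/2) * (\<integral>\<^sup>+\<omega>. ennreal (norm (drift_chain h \<delta> m \<omega> - exact_chain h m \<omega>)^4) \<partial>\<Omega>)
      + ennreal (8*error_increment s h) * (\<integral>\<^sup>+\<omega>. ennreal (norm (exact_chain h m \<omega>)^4) \<partial>\<Omega>)
      + ennreal (error_increment s h)"
    using step h error_const_nonneg
    by (subst \<Omega>.nn_integral_lincomb)
      (auto intro: measurable_coupled_space simp: step_admissible_def error_increment_def)
  finally show ?thesis .
qed

lemma drift_error_bound:
  "(\<integral>\<^sup>+\<omega>. ennreal (norm (drift_chain h \<delta> m \<omega> - exact_chain h m \<omega>)^4) \<partial>\<Omega>)
    \<le> ennreal (error_rate * h^2 / (real s)^2)"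
proof (rule ennreal_linear_recurrence_le[where \<rho>="1 - h*K/2"
      and e="\<lambda>m. \<integral>\<^sup>+\<omega>. ennreal (norm (drift_chain h \<delta> m \<omega> - exact_chain h m \<omega>)^4) \<partial>\<Omega>"
      and B="error_increment s h * (1 + 8*exact_moment_bound)"])
  show "(\<integral>\<^sup>+\<omega>. ennreal (norm (drift_chain h \<delta> 0 \<omega> - exact_chain h 0 \<omega>)^4) \<partial>\<Omega>)
      \<le> ennreal (error_rate * h^2 / (real s)^2)"
    by (simp add: drift_chain_def exact_chain_def)
  show "(\<integral>\<^sup>+\<omega>. ennreal (norm (drift_chain h \<delta> (Suc m) \<omega> - exact_chain h (Suc m) \<omega>)^4) \<partial>\<Omega>)
      \<le> ennreal (1 - h*K/2) * (\<integral>\<^sup>+\<omega>. ennreal (norm (drift_chain h \<delta> m \<omega> - exact_chain h m \<omega>)^4) \<partial>\<Omega>)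
        + ennreal (error_increment s h * (1 + 8*exact_moment_bound))" for m
  proof -
    have "ennreal (8*error_increment s h) * ennreal exact_moment_bound + ennreal (error_increment s h)
        = ennreal (error_increment s h * (1 + 8*exact_moment_bound))"
      using h error_increment_nonneg exact_moment_bound_nonneg by (simp add: ennreal_mult ennreal_plus algebra_simps)
    with drift_error_step[of \<delta> m] exact_chain_moment_bound[of m] show ?thesis
      by (smt (verit) add.assoc add_mono mult_left_mono order_refl order_trans zero_le)
  qed
  show "(1 - h*K/2) * (error_rate * h^2 / (real s)^2) + error_increment s h * (1 + 8*exact_moment_bound)
      \<le> error_rate * h^2 / (real s)^2"
    using K s by (simp add: error_rate_def error_increment_def field_simps power2_eq_square power3_eq_cube)
qed (use step h error_increment_nonneg error_rate_nonneg exact_moment_bound_nonneg in \<open>auto simp: step_admissible_def\<close>)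

lemma average_error_bound:
  "(\<integral>\<^sup>+\<omega>. ennreal (norm (Xbar_fc \<beta> h b k \<omega> - Xc \<beta> h a k \<omega>)^4) \<partial>\<Omega>)
    \<le> ennreal (error_rate * h^2 / (real s)^2)"
proof -
  interpret \<Omega>: prob_space \<Omega> by (rule prob_space_coupled)
  define R where "R = error_rate * h^2 / (real s)^2"
  let ?E = "\<lambda>\<delta> \<omega>. norm (drift_chain h \<delta> (k div 2) \<omega> - exact_chain h (k div 2) \<omega>)^4"
  have "(\<integral>\<^sup>+\<omega>. ennreal (norm (Xbar_fc \<beta> h b k \<omega> - Xc \<beta> h a k \<omega>)^4) \<partial>\<Omega>)
      \<le> (\<integral>\<^sup>+\<omega>. ennreal ((1/2) * ?E 0 \<omega> + (1/2) * ?E 1 \<omega> + 0) \<partial>\<Omega>)"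
    unfolding average_minus_exact
    by (intro nn_integral_mono ennreal_leI order_trans[OF power4_norm_midpoint_le]) simp
  also have "\<dots> = ennreal (1/2) * (\<integral>\<^sup>+\<omega>. ennreal (?E 0 \<omega>) \<partial>\<Omega>) + ennreal (1/2) * (\<integral>\<^sup>+\<omega>. ennreal (?E 1 \<omega>) \<partial>\<Omega>)"
    by (subst \<Omega>.nn_integral_lincomb) (auto intro: measurable_coupled_space)
  also have "\<dots> \<le> ennreal (1/2) * ennreal R + ennreal (1/2) * ennreal R"
    unfolding R_def by (intro add_mono mult_left_mono drift_error_bound) auto
  also have "\<dots> = ennreal R"
    using error_rate_nonneg by (subst (1 2) ennreal_mult[symmetric]) (auto simp: R_def simp flip: ennreal_plus)
  finally show ?thesis by (simp only: R_def)
qed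

end

end

theorem average_error_fourth_moment:
  "\<exists>h0 > 0. \<exists>C > 0. \<forall>s \<ge> 1. \<forall>h. 0 < h \<and> h < h0 \<longrightarrow>
     (\<forall>k. even k \<and> 2 \<le> k \<longrightarrow>
        (\<integral>\<^sup>+\<omega>. ennreal (norm (Xbar_fc \<beta> h b k \<omega> - Xc \<beta> h a k \<omega>)^4) \<partial>coupled_space \<nu> Q s)
          \<le> ennreal (C * h^2 / (real s)^2))"
proof -
  obtain \<gamma>0 where "0 < \<gamma>0" and admissible: "\<And>\<gamma>. 0 < \<gamma> \<Longrightarrow> \<gamma> < \<gamma>0 \<Longrightarrow> step_admissible \<gamma>"
    using eventually_step_admissible unfolding eventually_at_right_field by auto
  show ?thesis
  proof (rule exI[of _ "\<gamma>0/2"], intro conjI exI[of _ "error_rate + 1"] allI impI)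
    fix s :: nat and h :: real and k :: nat
    assume "1 \<le> s" "0 < h \<and> h < \<gamma>0/2" "even k \<and> 2 \<le> k"
    then have "(\<integral>\<^sup>+\<omega>. ennreal (norm (Xbar_fc \<beta> h b k \<omega> - Xc \<beta> h a k \<omega>)^4) \<partial>coupled_space \<nu> Q s)
        \<le> ennreal (error_rate * h^2 / (real s)^2)"
      by (intro average_error_bound admissible) auto
    also have "\<dots> \<le> ennreal ((error_rate + 1) * h^2 / (real s)^2)"
      by (intro ennreal_leI divide_right_mono mult_right_mono) auto
    finally show "(\<integral>\<^sup>+\<omega>. ennreal (norm (Xbar_fc \<beta> h b k \<omega> - Xc \<beta> h a k \<omega>)^4) \<partial>coupled_space \<nu> Q s)
        \<le> ennreal ((error_rate + 1) * h^2 / (real s)^2)" .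
  qed (use \<open>0 < \<gamma>0\<close> error_rate_nonneg in auto)
qed

end

theorem lemma12:
  fixes a :: "real^'d \<Rightarrow> real^'d"
    and b :: "real^'d \<Rightarrow> real^'n \<Rightarrow> real^'d"
    and Q :: "nat \<Rightarrow> (real^'n) measure"
    and \<nu> :: "(real^'d) measure"
    and \<beta> L K Ca1 Ca2 \<kappa> L04 :: real
    and \<sigma>2 \<sigma>4 :: "nat \<Rightarrow> real"
  assumes beta: "\<beta> \<ge> 0"
    and laws: "\<And>s. s \<ge> 1 \<Longrightarrow> prob_space (Q s) \<and> sets (Q s) = sets borel"
    and b_meas: "(\<lambda>(x, u). b x u) \<in> borel_measurable (borel \<Otimes>\<^sub>M borel)"
    and unbiased: "\<And>s x. s \<ge> 1 \<Longrightarrow> integrable (Q s) (\<lambda>u. b x u) \<and> (\<integral>u. b x u \<partial>Q s) = a x"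
    and A1_lip: "\<And>x y. norm (a x - a y) \<le> L * norm (x - y)"
    and A1_K: "K > 0"
    and A1_diss: "\<And>x y. inner (x - y) (a x - a y) \<le> - K * norm (x - y)^2"
    and A1_C2: "C2_bounded a Ca1 Ca2"
    and A3: "\<And>s x. s \<ge> 1 \<Longrightarrow>
        (\<integral>\<^sup>+u. ennreal (norm (b x u - a x)^2) \<partial>Q s) \<le> ennreal (\<sigma>2 s * (1 + norm x^2))"
    and A3_rate: "\<And>s. s \<ge> 1 \<Longrightarrow> \<sigma>2 s \<le> \<kappa> / real s"
    and A4: "\<And>s x. s \<ge> 1 \<Longrightarrow>
        (\<integral>\<^sup>+u. ennreal (norm (b x u - a x)^4) \<partial>Q s) \<le> ennreal (\<sigma>4 s * (1 + norm x^4))"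
    and A4_rate: "\<And>s. s \<ge> 1 \<Longrightarrow> \<sigma>4 s \<le> \<kappa> / (real s)^2"
    and A7: "\<And>x. norm (a x)^4 \<le> L04 * (1 + norm x^4)"
    and X0_law: "prob_space \<nu>" "sets \<nu> = sets borel"
    and X0_moment: "(\<integral>\<^sup>+x. ennreal (norm x^4) \<partial>\<nu>) < \<infinity>"
  shows "\<exists>h0 > 0. \<exists>C > 0. \<forall>s \<ge> 1. \<forall>h. 0 < h \<and> h < h0 \<longrightarrow>
           (\<forall>k. even k \<and> 2 \<le> k \<longrightarrow>
              (\<integral>\<^sup>+\<omega>. ennreal (norm (Xbar_fc \<beta> h b k \<omega> - Xc \<beta> h a k \<omega>)^4) \<partial>coupled_space \<nu> Q s)
                \<le> ennreal (C * h^2 / (real s)^2))"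
proof -
  have "continuous_on UNIV a"
  proof -
    obtain Da where "\<And>x. (a has_derivative Da x) (at x)"
      using A1_C2 unfolding C2_bounded_def by blast
    then show ?thesis by (intro continuous_at_imp_continuous_on ballI) (auto intro: has_derivative_continuous)
  qed
  then have a_meas: "a \<in> borel_measurable borel" by (rule borel_measurable_continuous_onI)
  have noise2: "(\<integral>\<^sup>+u. ennreal (norm (b x u - a x)^2) \<partial>Q s) \<le> ennreal (max \<kappa> 0 / real s * (1 + norm x^2))"
    if s: "1 \<le> s" for s x
  proof -
    have "\<sigma>2 s \<le> max \<kappa> 0 / real s" using A3_rate[OF s] s by (smt (verit) divide_right_mono of_nat_0_le_iff)
    then show ?thesis by (intro order_trans[OF A3[OF s]] ennreal_leI mult_right_mono) auto
  qed
  have noise4: "(\<integral>\<^sup>+u. ennreal (norm (b x u - a x)^4) \<partial>Q s) \<le> ennreal (max \<kappa> 0 / (real s)^2 * (1 + norm x^4))"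
    if s: "1 \<le> s" for s x
  proof -
    have "\<sigma>4 s \<le> max \<kappa> 0 / (real s)^2" using A4_rate[OF s] s by (smt (verit) divide_right_mono zero_le_power2)
    then show ?thesis by (intro order_trans[OF A4[OF s]] ennreal_leI mult_right_mono) auto
  qed
  interpret coupled_chains a b Q \<nu> \<beta> L K "max \<kappa> 0"
    by (rule coupled_chains.intro) (fact beta laws b_meas unbiased a_meas A1_lip A1_K A1_diss
        max.cobounded2 noise2 noise4 X0_law X0_moment)+
  show ?thesis by (rule average_error_fourth_moment)
qed

end
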